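(* Let $H,K$ be Hilbert spaces and let $T$ be a densely defined closed operator from $D(T)\subset H$ into $K$ with closed range. Then: (1) $w(T)=(T^{\dagger})^{*}$ and it is bounded; (2) $w(w(T))$ is closable and $\overline{w(w(T))}=T$; (3) $(w(T))^{*}=w(T^{*})$; (4) $T^{*}w(T)=\overline{w(T^{*})T}=P_{R(T^{*})}$; (5) $\overline{w(T)T^{*}}=T\,w(T^{*})=P_{R(T)}$; (6) $w(T)^{*}w(T)=w(T^{*}T)$.
   Context: For a densely defined closed operator $A$ with closed range from $D(A)\subset H_1$ into a Hilbert space $H_2$, $A^{*}$ is its adjoint, $C(A)=D(A)\cap N(A)^{\perp}$, and the Moore–Penrose inverse $A^{\dagger}$ is defined on $R(A)\oplus^{\perp}R(A)^{\perp}$ by $A^{\dagger}y=(A|_{C(A)})^{-1}y$ for $y\in R(A)$ and $A^{\dagger}y=0$ for $y\in R(A)^{\perp}$ (it is bounded). The generalized Cauchy dual is $w(A)=A(A^{*}A)^{\dagger}$, with products of operators on natural domains. $P_V$ denotes the orthogonal projection onto a closed subspace $V$; $\overline{B}$ denotes the closure of a closable operator $B$. *)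

theory Defs
  imports "HOL-Analysis.Analysis"
begin

text \<open>Linear operators (possibly unbounded, not everywhere defined) between real
Hilbert spaces are represented by their graphs: a set of pairs (x, A x).
The domain is Domain A, the range is Range A.\<close>

definition is_op :: "('a::real_vector \<times> 'b::real_vector) set \<Rightarrow> bool" where
  "is_op A \<longleftrightarrow> subspace A \<and> (\<forall>x y z. (x, y) \<in> A \<longrightarrow> (x, z) \<in> A \<longrightarrow> y = z)"

definition densely_defined :: "('a::topological_space \<times> 'b) set \<Rightarrow> bool" where
  "densely_defined A \<longleftrightarrow> closure (Domain A) = UNIV"

definition closed_op :: "('a::topological_space \<times> 'b::topological_space) set \<Rightarrow> bool" where
  "closed_op A \<longleftrightarrow> closed A"

definition closable :: "('a::real_normed_vector \<times> 'b::real_normed_vector) set \<Rightarrow> bool" where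
  "closable A \<longleftrightarrow> is_op (closure A)"

definition op_closure :: "('a::topological_space \<times> 'b::topological_space) set \<Rightarrow> ('a \<times> 'b) set" where
  "op_closure A = closure A"

definition bounded_op :: "('a::real_normed_vector \<times> 'b::real_normed_vector) set \<Rightarrow> bool" where
  "bounded_op A \<longleftrightarrow> (\<exists>C. \<forall>x y. (x, y) \<in> A \<longrightarrow> norm y \<le> C * norm x)"

definition null_space :: "('a \<times> 'b::zero) set \<Rightarrow> 'a set" where
  "null_space A = {x. (x, 0) \<in> A}"

definition adj :: "('a::real_inner \<times> 'b::real_inner) set \<Rightarrow> ('b \<times> 'a) set" where
  "adj A = {(y, z). \<forall>x w. (x, w) \<in> A \<longrightarrow> inner w y = inner x z}"

definition op_mult :: "('b \<times> 'c) set \<Rightarrow> ('a \<times> 'b) set \<Rightarrow> ('a \<times> 'c) set" where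
  "op_mult A B = {(x, z). \<exists>y. (x, y) \<in> B \<and> (y, z) \<in> A}"

definition carrier_op :: "('a::real_inner \<times> 'b::real_vector) set \<Rightarrow> 'a set" where
  "carrier_op A = Domain A \<inter> orthogonal_comp (null_space A)"

definition mp_inv :: "('a::real_inner \<times> 'b::real_inner) set \<Rightarrow> ('b \<times> 'a) set" where
  "mp_inv A = {(y1 + y2, x) | x y1 y2. (x, y1) \<in> A \<and> x \<in> carrier_op A
                                     \<and> y2 \<in> orthogonal_comp (Range A)}"

text \<open>Generalized Cauchy dual w(A) = A (A* A)\<dagger>.\<close>
definition cauchy_dual :: "('a::real_inner \<times> 'b::real_inner) set \<Rightarrow> ('a \<times> 'b) set" where
  "cauchy_dual A = op_mult A (mp_inv (op_mult (adj A) A))"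

definition proj_op :: "'a::real_inner set \<Rightarrow> ('a \<times> 'a) set" where
  "proj_op V = {(x, y). y \<in> V \<and> x - y \<in> orthogonal_comp V}"

end

theory Submission
  imports Defs
begin

text \<open>
  For B = T*T one has R(B) = R(T*) and N(B) = N(T); this collapses w(T) = T B\<dagger> to (T*)\<dagger>.
  Everything then follows from a small calculus of the Moore--Penrose inverse of a closed, densely
  defined operator A with closed range: (A*)\<dagger> = (A\<dagger>)*, A A\<dagger> = P_R(A), the closure of A\<dagger>A is
  the projection onto N(A)\<bottom>, (A\<dagger>)\<dagger> = A, and the closed range theorem R(A*) = N(A)\<bottom>.
  Boundedness of A\<dagger> comes from the uniform boundedness principle, and item (2) reduces to the
  fact that w(w(T)) is T restricted to D(T*T), which is a core for T (von Neumann).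
\<close>

section \<open>Hilbert space preliminaries\<close>

lemma mem_orthogonal_comp_iff: "x \<in> V\<^sup>\<bottom> \<longleftrightarrow> (\<forall>y\<in>V. inner y x = 0)"
  by (auto simp: orthogonal_comp_def orthogonal_def)

lemma inner_eq_if_diff_orthogonal: "x \<in> V \<Longrightarrow> y - y' \<in> V\<^sup>\<bottom> \<Longrightarrow> inner x y = inner x y'"
  by (simp add: mem_orthogonal_comp_iff inner_diff_right)

lemma closed_orthogonal_comp: "closed ((V :: 'a::real_inner set)\<^sup>\<bottom>)"
proof -
  have "V\<^sup>\<bottom> = (\<Inter>y\<in>V. {x. inner y x = 0})"
    by (auto simp: mem_orthogonal_comp_iff)
  then show ?thesis
    by (auto intro!: closed_Collect_eq continuous_intros)
qed

lemma orthogonal_comp_closure: "(closure V)\<^sup>\<bottom> = (V :: 'a::real_inner set)\<^sup>\<bottom>"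
proof
  show "(closure V)\<^sup>\<bottom> \<subseteq> V\<^sup>\<bottom>"
    by (simp add: closure_subset orthogonal_comp_anti_mono)
  show "V\<^sup>\<bottom> \<subseteq> (closure V)\<^sup>\<bottom>"
  proof
    fix x assume "x \<in> V\<^sup>\<bottom>"
    then have "closure V \<subseteq> {y. inner y x = 0}"
      by (intro closure_minimal closed_Collect_eq continuous_intros) (auto simp: mem_orthogonal_comp_iff)
    then show "x \<in> (closure V)\<^sup>\<bottom>"
      by (auto simp: mem_orthogonal_comp_iff)
  qed
qed

lemma subspace_closure:
  fixes V :: "'a::real_normed_vector set"
  assumes "subspace V"
  shows "subspace (closure V)"
  unfolding subspace_def
proof (intro conjI ballI allI)
  show "0 \<in> closure V"
    using assms closure_subset subspace_0 by blast
  fix x y assume "x \<in> closure V" "y \<in> closure V"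
  then have "(x, y) \<in> closure (V \<times> V)"
    by (simp add: closure_Times)
  then have "x + y \<in> (\<lambda>p. fst p + snd p) ` closure (V \<times> V)"
    by force
  also have "\<dots> \<subseteq> closure ((\<lambda>p. fst p + snd p) ` (V \<times> V))"
    by (intro closure_bounded_linear_image_subset bounded_linear_add bounded_linear_fst
        bounded_linear_snd)
  also have "\<dots> \<subseteq> closure V"
    using assms by (intro closure_mono) (auto simp: subspace_add)
  finally show "x + y \<in> closure V" .
next
  fix c :: real and x assume "x \<in> closure V"
  then have "c *\<^sub>R x \<in> closure (scaleR c ` V)"
    using closure_bounded_linear_image_subset[OF bounded_linear_scaleR_right] by blast
  also have "\<dots> \<subseteq> closure V"
    using assms by (intro closure_mono) (auto simp: subspace_scale)
  finally show "c *\<^sub>R x \<in> closure V" .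
qed

lemma parallelogram_law:
  fixes u w :: "'a::real_inner"
  shows "(norm (u + w))\<^sup>2 + (norm (u - w))\<^sup>2 = 2 * (norm u)\<^sup>2 + 2 * (norm w)\<^sup>2"
  by (simp add: power2_norm_eq_inner inner_add_left inner_add_right inner_diff_left
      inner_diff_right inner_commute)

lemma parallelogram_midpoint_bound:
  fixes x a b :: "'a::real_inner"
  assumes "0 \<le> d" "d \<le> norm (x - ((1/2) *\<^sub>R a + (1/2) *\<^sub>R b))"
  shows "(norm (a - b))\<^sup>2 \<le> 2 * (norm (x - a))\<^sup>2 + 2 * (norm (x - b))\<^sup>2 - 4 * d\<^sup>2"
proof -
  have "d\<^sup>2 \<le> (norm (x - ((1/2) *\<^sub>R a + (1/2) *\<^sub>R b)))\<^sup>2"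
    using assms by (simp add: power_mono)
  moreover have "(x - a) + (x - b) = 2 *\<^sub>R (x - ((1/2) *\<^sub>R a + (1/2) *\<^sub>R b))"
    by (simp add: algebra_simps scaleR_2)
  then have "(norm ((x - a) + (x - b)))\<^sup>2 = 4 * (norm (x - ((1/2) *\<^sub>R a + (1/2) *\<^sub>R b)))\<^sup>2"
    by (simp add: power_mult_distrib)
  moreover have "(norm ((x - a) - (x - b)))\<^sup>2 = (norm (a - b))\<^sup>2"
    by (simp add: norm_minus_commute)
  ultimately show ?thesis
    using parallelogram_law[of "x - a" "x - b"] by linarith
qed

lemma Cauchy_if_norm_diff_bound:
  fixes v :: "nat \<Rightarrow> 'a::real_normed_vector"
  assumes "\<And>m n. (norm (v m - v n))\<^sup>2 \<le> 2 / (real m + 1) + 2 / (real n + 1)"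
  shows "Cauchy v"
proof (rule metric_CauchyI)
  fix e :: real assume "e > 0"
  obtain N :: nat where "4 / e\<^sup>2 < real N"
    using reals_Archimedean2 by blast
  moreover have "0 < e\<^sup>2"
    using \<open>e > 0\<close> by simp
  ultimately have N: "4 / (real N + 1) < e\<^sup>2"
    by (simp add: field_simps) (use \<open>0 < e\<^sup>2\<close> in linarith)
  show "\<exists>M. \<forall>m\<ge>M. \<forall>n\<ge>M. dist (v m) (v n) < e"
  proof (intro exI allI impI)
    fix m n assume "N \<le> m" "N \<le> n"
    then have "1 / (real m + 1) \<le> 1 / (real N + 1)" "1 / (real n + 1) \<le> 1 / (real N + 1)"
      by (simp_all add: frac_le)
    with assms[of m n] N have "(norm (v m - v n))\<^sup>2 < e\<^sup>2"
      by linarith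
    with \<open>e > 0\<close> show "dist (v m) (v n) < e"
      by (simp add: dist_norm power_less_imp_less_base)
  qed
qed

lemma closest_point_exists_complete:
  fixes S :: "'a::{real_inner,complete_space} set"
  assumes "closed S" "convex S" "S \<noteq> {}"
  obtains p where "p \<in> S" "\<And>y. y \<in> S \<Longrightarrow> norm (x - p) \<le> norm (x - y)"
proof -
  define d where "d = infdist x S"
  have d_le: "d \<le> norm (x - y)" if "y \<in> S" for y
    using infdist_le[OF that, of x] by (simp add: d_def dist_norm)
  have "0 \<le> d"
    by (simp add: d_def infdist_nonneg)
  have "\<exists>v\<in>S. (norm (x - v))\<^sup>2 < d\<^sup>2 + 1 / (real n + 1)" for n
  proof -
    have "d < sqrt (d\<^sup>2 + 1 / (real n + 1))"
      using \<open>0 \<le> d\<close> by (simp add: real_less_rsqrt)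
    then obtain v where "v \<in> S" "norm (x - v) < sqrt (d\<^sup>2 + 1 / (real n + 1))"
      unfolding d_def infdist_notempty[OF assms(3)]
      using assms(3) by (subst (asm) cINF_less_iff) (auto simp: dist_norm intro: bdd_belowI[of _ 0])
    then have "(norm (x - v))\<^sup>2 < (sqrt (d\<^sup>2 + 1 / (real n + 1)))\<^sup>2"
      by (intro power_strict_mono) auto
    with \<open>v \<in> S\<close> show ?thesis
      by (auto simp: add_nonneg_nonneg)
  qed
  then obtain v where v: "\<And>n. v n \<in> S" "\<And>n. (norm (x - v n))\<^sup>2 < d\<^sup>2 + 1 / (real n + 1)"
    by metis
  \<comment> \<open>Midpoints of points of S lie in S, so they are at distance at least d from x.\<close>
  have "(norm (v m - v n))\<^sup>2 \<le> 2 / (real m + 1) + 2 / (real n + 1)" for m n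
  proof -
    have "(1/2) *\<^sub>R v m + (1/2) *\<^sub>R v n \<in> S"
      using assms(2) v(1) by (intro convexD) auto
    from parallelogram_midpoint_bound[OF \<open>0 \<le> d\<close> d_le[OF this]] v(2)[of m] v(2)[of n]
    show ?thesis
      by linarith
  qed
  then obtain p where lim: "v \<longlonglongrightarrow> p"
    using Cauchy_if_norm_diff_bound Cauchy_convergent_iff convergent_def by blast
  have "p \<in> S"
    using assms(1) v(1) lim closed_sequential_limits by blast
  have "(\<lambda>n. (norm (x - v n))\<^sup>2) \<longlonglongrightarrow> (norm (x - p))\<^sup>2"
    by (intro tendsto_intros lim)
  moreover have "(\<lambda>n. d\<^sup>2 + 1 / (real n + 1)) \<longlonglongrightarrow> d\<^sup>2 + 0"
    using LIMSEQ_inverse_real_of_nat_add[of "d\<^sup>2"] by (simp add: inverse_eq_divide add.commute)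
  ultimately have "(norm (x - p))\<^sup>2 \<le> d\<^sup>2"
    using v(2) by (intro LIMSEQ_le[where X="\<lambda>n. (norm (x - v n))\<^sup>2"]) (auto intro: less_imp_le)
  then have "norm (x - p) \<le> d"
    using \<open>0 \<le> d\<close> by (simp add: power2_le_iff_abs_le)
  then show ?thesis
    using that \<open>p \<in> S\<close> d_le by (meson order_trans)
qed

lemma orthogonal_decomposition_exists:
  fixes V :: "'a::{real_inner,complete_space} set"
  assumes "subspace V" "closed V"
  obtains p where "p \<in> V" "x - p \<in> V\<^sup>\<bottom>"
proof -
  obtain p where "p \<in> V" and p_min: "\<And>y. y \<in> V \<Longrightarrow> norm (x - p) \<le> norm (x - y)"
    using closest_point_exists_complete[OF assms(2) subspace_imp_convex[OF assms(1)]]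
      subspace_0[OF assms(1)] by blast
  have "inner y (x - p) = 0" if "y \<in> V" for y
  proof (cases "y = 0")
    case False
    define c where "c = inner y (x - p)"
    define t where "t = c / (norm y)\<^sup>2"
    have "(norm y)\<^sup>2 > 0"
      using False by simp
    have "p + t *\<^sub>R y \<in> V"
      using assms(1) \<open>p \<in> V\<close> that by (simp add: subspace_add subspace_scale)
    from p_min[OF this] have "(norm (x - p))\<^sup>2 \<le> (norm ((x - p) - t *\<^sub>R y))\<^sup>2"
      by (simp add: power_mono diff_diff_eq)
    also have "\<dots> = (norm (x - p))\<^sup>2 - 2 * t * c + t\<^sup>2 * (norm y)\<^sup>2"
      unfolding power2_norm_eq_inner
      by (simp add: inner_diff_left inner_diff_right c_def inner_commute power2_eq_square
          algebra_simps)
    also have "\<dots> = (norm (x - p))\<^sup>2 - c\<^sup>2 / (norm y)\<^sup>2"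
      using \<open>(norm y)\<^sup>2 > 0\<close> by (simp add: t_def field_simps power2_eq_square)
    finally have "c\<^sup>2 \<le> 0"
      using \<open>(norm y)\<^sup>2 > 0\<close> by (simp add: divide_le_0_iff)
    then show ?thesis
      by (simp add: c_def)
  qed simp
  with \<open>p \<in> V\<close> show ?thesis
    using that by (simp add: mem_orthogonal_comp_iff)
qed

lemma orthogonal_decomposition_unique:
  assumes "subspace V" "a1 \<in> V" "c1 \<in> V" "a2 \<in> V\<^sup>\<bottom>" "c2 \<in> V\<^sup>\<bottom>" "a1 + a2 = c1 + c2"
  shows "a1 = c1"
proof -
  have "a1 - c1 = c2 - a2"
    using assms(6) by (simp add: algebra_simps)
  moreover have "a1 - c1 \<in> V"
    using assms(1-3) by (rule subspace_diff)
  moreover have "c2 - a2 \<in> V\<^sup>\<bottom>"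
    using subspace_orthogonal_comp assms(5,4) by (rule subspace_diff)
  ultimately have "a1 - c1 \<in> V \<inter> V\<^sup>\<bottom>"
    by simp
  then show ?thesis
    using orthogonal_Int_0[OF assms(1)] by simp
qed

lemma orthogonal_comp_orthogonal_comp_closed:
  fixes V :: "'a::{real_inner,complete_space} set"
  assumes "subspace V" "closed V"
  shows "V\<^sup>\<bottom>\<^sup>\<bottom> = V"
proof
  show "V\<^sup>\<bottom>\<^sup>\<bottom> \<subseteq> V"
  proof
    fix x assume x: "x \<in> V\<^sup>\<bottom>\<^sup>\<bottom>"
    obtain p where p: "p \<in> V" "x - p \<in> V\<^sup>\<bottom>"
      using orthogonal_decomposition_exists[OF assms, of x] by blast
    have "inner (x - p) x = 0"
      using x p(2) unfolding mem_orthogonal_comp_iff[of x] by blast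
    moreover have "inner (x - p) p = 0"
      using p unfolding mem_orthogonal_comp_iff by (metis inner_commute)
    ultimately have "inner (x - p) (x - p) = 0"
      by (simp add: inner_diff_right)
    with p(1) show "x \<in> V"
      by simp
  qed
qed (rule orthogonal_comp_subset)

lemma orthogonal_comp_orthogonal_comp:
  fixes V :: "'a::{real_inner,complete_space} set"
  assumes "subspace V"
  shows "V\<^sup>\<bottom>\<^sup>\<bottom> = closure V"
  using orthogonal_comp_orthogonal_comp_closed[OF subspace_closure[OF assms] closed_closure]
  by (simp only: orthogonal_comp_closure)

definition orth_proj :: "'a::real_inner set \<Rightarrow> 'a \<Rightarrow> 'a" where
  "orth_proj V x = (SOME p. p \<in> V \<and> x - p \<in> V\<^sup>\<bottom>)"

context
  fixes V :: "'a::{real_inner,complete_space} set"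
  assumes subspace_V: "subspace V" and closed_V: "closed V"
begin

lemma orth_proj_in: "orth_proj V x \<in> V"
  and orth_proj_orthogonal: "x - orth_proj V x \<in> V\<^sup>\<bottom>"
proof -
  obtain p where "p \<in> V \<and> x - p \<in> V\<^sup>\<bottom>"
    using orthogonal_decomposition_exists[OF subspace_V closed_V, of x] by blast
  then have "orth_proj V x \<in> V \<and> x - orth_proj V x \<in> V\<^sup>\<bottom>"
    unfolding orth_proj_def by (rule someI[where P = "\<lambda>p. p \<in> V \<and> x - p \<in> V\<^sup>\<bottom>"])
  then show "orth_proj V x \<in> V" "x - orth_proj V x \<in> V\<^sup>\<bottom>"
    by auto
qed

lemma orth_proj_unique:
  assumes "p \<in> V" "x - p \<in> V\<^sup>\<bottom>"
  shows "orth_proj V x = p"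
  using orthogonal_decomposition_unique[OF subspace_V orth_proj_in[of x] assms(1)
      orth_proj_orthogonal[of x] assms(2)]
  by simp

lemma orth_proj_id: "x \<in> V \<Longrightarrow> orth_proj V x = x"
  by (rule orth_proj_unique) (auto simp: mem_orthogonal_comp_iff)

lemma orth_proj_eq_0: "x \<in> V\<^sup>\<bottom> \<Longrightarrow> orth_proj V x = 0"
  by (rule orth_proj_unique) (auto simp: subspace_V subspace_0)

lemma norm_orth_proj_le: "norm (orth_proj V x) \<le> norm x"
proof (rule power2_le_imp_le)
  have "orthogonal (orth_proj V x) (x - orth_proj V x)"
    using orth_proj_in orth_proj_orthogonal by (simp add: mem_orthogonal_comp_iff orthogonal_def)
  from norm_add_Pythagorean[OF this]
  show "(norm (orth_proj V x))\<^sup>2 \<le> (norm x)\<^sup>2"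
    by simp
qed simp

lemma bounded_linear_orth_proj: "bounded_linear (orth_proj V)"
proof (rule bounded_linear_intro[where K=1])
  fix x y :: 'a and c :: real
  show "orth_proj V (x + y) = orth_proj V x + orth_proj V y"
  proof (rule orth_proj_unique)
    show "orth_proj V x + orth_proj V y \<in> V"
      by (intro subspace_add subspace_V orth_proj_in)
    have "x + y - (orth_proj V x + orth_proj V y) = (x - orth_proj V x) + (y - orth_proj V y)"
      by simp
    then show "x + y - (orth_proj V x + orth_proj V y) \<in> V\<^sup>\<bottom>"
      using orth_proj_orthogonal by (metis subspace_add subspace_orthogonal_comp)
  qed
  show "orth_proj V (c *\<^sub>R x) = c *\<^sub>R orth_proj V x"
  proof (rule orth_proj_unique)
    show "c *\<^sub>R orth_proj V x \<in> V"
      by (intro subspace_scale subspace_V orth_proj_in)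
    have "c *\<^sub>R x - c *\<^sub>R orth_proj V x = c *\<^sub>R (x - orth_proj V x)"
      by (simp add: scaleR_diff_right)
    then show "c *\<^sub>R x - c *\<^sub>R orth_proj V x \<in> V\<^sup>\<bottom>"
      using orth_proj_orthogonal by (metis subspace_scale subspace_orthogonal_comp)
  qed
  show "norm (orth_proj V x) \<le> norm x * 1"
    by (simp add: norm_orth_proj_le)
qed

lemma proj_op_eq_graph: "proj_op V = range (\<lambda>x. (x, orth_proj V x))"
  by (auto simp: proj_op_def orth_proj_in orth_proj_orthogonal orth_proj_unique)

lemma proj_op_id_iff: "y \<in> V \<Longrightarrow> (y, z) \<in> proj_op V \<longleftrightarrow> z = y"
  using orth_proj_id[of y] orth_proj_unique[of z y] by (auto simp: proj_op_def mem_orthogonal_comp_iff)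

lemma closure_proj_op_restrict:
  assumes "closure D = UNIV"
  shows "closure {p \<in> proj_op V. fst p \<in> D} = proj_op V"
proof -
  have restrict: "{p \<in> proj_op V. fst p \<in> D} = (\<lambda>x. (x, orth_proj V x)) ` D"
    by (auto simp: proj_op_eq_graph)
  have cont: "continuous_on UNIV (\<lambda>x. (x, orth_proj V x))"
    using bounded_linear_orth_proj linear_continuous_on by (auto intro!: continuous_intros)
  have "closed (proj_op V)"
    using continuous_closed_graph[OF closed_UNIV linear_continuous_on[OF bounded_linear_orth_proj]]
    by (simp add: proj_op_eq_graph)
  then have "closure {p \<in> proj_op V. fst p \<in> D} \<subseteq> proj_op V"
    by (simp add: closure_minimal)
  moreover have "proj_op V \<subseteq> closure {p \<in> proj_op V. fst p \<in> D}"
    using continuous_image_closure_subset[OF cont, of D] assms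
    unfolding restrict by (simp add: proj_op_eq_graph)
  ultimately show ?thesis
    by blast
qed

end

lemma riesz_representation:
  fixes f :: "'a::{real_inner,complete_space} \<Rightarrow> real"
  assumes "bounded_linear f"
  obtains k where "\<And>x. f x = inner x k"
proof (cases "\<forall>x. f x = 0")
  case True
  then show ?thesis
    using that[of 0] by simp
next
  case False
  then obtain u where "f u \<noteq> 0"
    by blast
  define K where "K = {x. f x = 0}"
  have "subspace K"
    using assms by (simp add: K_def subspace_def linear_simps)
  have "closed K"
    using assms unfolding K_def
    by (intro closed_Collect_eq continuous_intros) (simp add: linear_continuous_on)
  define q where "q = u - orth_proj K u"
  have "q \<in> K\<^sup>\<bottom>"
    using orth_proj_orthogonal[OF \<open>subspace K\<close> \<open>closed K\<close>] by (simp add: q_def)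
  have "f (orth_proj K u) = 0"
    using orth_proj_in[OF \<open>subspace K\<close> \<open>closed K\<close>] by (simp add: K_def)
  then have fq: "f q = f u"
    using assms by (simp add: q_def linear_simps)
  then have "q \<noteq> 0"
    using \<open>f u \<noteq> 0\<close> assms by (auto simp: linear_simps)
  \<comment> \<open>Every x is a multiple of q modulo the kernel K, which is orthogonal to q.\<close>
  have "f x = inner x ((f q / (norm q)\<^sup>2) *\<^sub>R q)" for x
  proof -
    have "f (x - (f x / f q) *\<^sub>R q) = 0"
      using assms fq \<open>f u \<noteq> 0\<close> by (simp add: linear_simps)
    then have "inner (x - (f x / f q) *\<^sub>R q) q = 0"
      using \<open>q \<in> K\<^sup>\<bottom>\<close> by (simp add: K_def mem_orthogonal_comp_iff)
    then have "inner x q = (f x / f q) * (norm q)\<^sup>2"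
      by (simp add: inner_diff_left power2_norm_eq_inner)
    then show ?thesis
      using \<open>q \<noteq> 0\<close> fq \<open>f u \<noteq> 0\<close> by (simp add: field_simps)
  qed
  then show ?thesis
    using that by blast
qed

lemma Baire_closed_cover:
  fixes E :: "nat \<Rightarrow> 'a::complete_space set"
  assumes "\<And>n. closed (E n)" "\<Union>(range E) = UNIV"
  obtains n where "interior (E n) \<noteq> {}"
proof -
  have "\<exists>n. interior (E n) \<noteq> {}"
  proof (rule ccontr)
    assume "\<nexists>n. interior (E n) \<noteq> {}"
    have "euclidean interior_of \<Union>(range E) = {}"
    proof (rule Baire_category_alt)
      show "completely_metrizable_space (euclidean :: 'a topology) \<or>
          locally_compact_space (euclidean :: 'a topology) \<and> regular_space (euclidean :: 'a topology)"
        using completely_metrizable_space_euclidean by blast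
      show "closedin euclidean S \<and> euclidean interior_of S = {}" if S: "S \<in> range E" for S
      proof -
        obtain m where "S = E m"
          using S by blast
        then show ?thesis
          using assms(1) \<open>\<nexists>n. interior (E n) \<noteq> {}\<close> by simp
      qed
    qed simp
    with assms(2) show False
      by simp
  qed
  then show ?thesis
    using that by blast
qed

lemma bounded_linear_bound_from_ball:
  assumes "bounded_linear f" "r > 0" "\<And>y. y \<in> ball x0 r \<Longrightarrow> norm (f y) \<le> c"
  shows "norm (f x) \<le> (4 * c / r) * norm x"
proof (cases "x = 0")
  case True
  then show ?thesis
    using assms(1) by (simp add: linear_simps)
next
  case False
  define t where "t = r / (2 * norm x)"
  have "t > 0"
    using assms(2) False by (simp add: t_def)
  have "norm (t *\<^sub>R x) < r"
    using False assms(2) by (simp add: t_def)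
  then have "x0 + t *\<^sub>R x \<in> ball x0 r"
    by (simp add: dist_norm)
  moreover have "f (x0 + t *\<^sub>R x) = f x0 + t *\<^sub>R f x"
    using assms(1) by (simp add: linear_simps)
  ultimately have "norm (f x0 + t *\<^sub>R f x) \<le> c"
    using assms(3) by metis
  moreover have "norm (f x0) \<le> c"
    using assms(2,3) by simp
  ultimately have "t * norm (f x) \<le> 2 * c"
    using norm_triangle_ineq4[of "f x0 + t *\<^sub>R f x" "f x0"] \<open>t > 0\<close> by simp
  then show ?thesis
    using \<open>t > 0\<close> assms(2) False by (simp add: t_def field_simps)
qed

lemma uniform_boundedness:
  fixes f :: "'i \<Rightarrow> 'a::{real_normed_vector,complete_space} \<Rightarrow> 'b::real_normed_vector"
  assumes linear: "\<And>i. i \<in> I \<Longrightarrow> bounded_linear (f i)"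
    and pointwise: "\<And>x. \<exists>B. \<forall>i\<in>I. norm (f i x) \<le> B"
  obtains M where "0 \<le> M" "\<And>i x. i \<in> I \<Longrightarrow> norm (f i x) \<le> M * norm x"
proof -
  define E where "E n = {x. \<forall>i\<in>I. norm (f i x) \<le> real n}" for n :: nat
  have "closed (E n)" for n
  proof -
    have "closed {x. norm (f i x) \<le> real n}" if "i \<in> I" for i
      using linear_continuous_on[OF linear[OF that]]
      by (intro closed_Collect_le continuous_on_norm continuous_on_const)
    then show ?thesis
      by (simp add: E_def Collect_ball_eq closed_INT)
  qed
  moreover have "\<Union>(range E) = UNIV"
  proof (intro set_eqI iffI UNIV_I)
    fix x
    obtain B where "\<forall>i\<in>I. norm (f i x) \<le> B"
      using pointwise[of x] by blast
    moreover have "B \<le> real (nat \<lceil>B\<rceil>)"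
      by linarith
    ultimately have "x \<in> E (nat \<lceil>B\<rceil>)"
      unfolding E_def by fastforce
    then show "x \<in> \<Union>(range E)"
      by blast
  qed
  ultimately obtain n where "interior (E n) \<noteq> {}"
    by (rule Baire_closed_cover)
  then obtain x0 where "x0 \<in> interior (E n)"
    by blast
  then obtain r where "r > 0" "ball x0 r \<subseteq> E n"
    using open_interior[of "E n"] interior_subset[of "E n"] unfolding open_contains_ball
    by blast
  then have "norm (f i x) \<le> (4 * real n / r) * norm x" if "i \<in> I" for i x
    using that by (intro bounded_linear_bound_from_ball[OF linear]) (auto simp: E_def)
  moreover have "0 \<le> 4 * real n / r"
    using \<open>r > 0\<close> by simp
  ultimately show ?thesis
    using that by blast
qed

section \<open>Operators as graphs\<close>

lemma subspace_Pair_zero: "subspace A \<Longrightarrow> (0, 0) \<in> A"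
  by (metis subspace_0 zero_prod_def)

lemma subspace_Pair_add: "subspace A \<Longrightarrow> (a, b) \<in> A \<Longrightarrow> (c, d) \<in> A \<Longrightarrow> (a + c, b + d) \<in> A"
  by (metis add_Pair subspace_add)

lemma subspace_Pair_diff: "subspace A \<Longrightarrow> (a, b) \<in> A \<Longrightarrow> (c, d) \<in> A \<Longrightarrow> (a - c, b - d) \<in> A"
  by (metis diff_Pair subspace_diff)

lemma subspace_Pair_scale: "subspace A \<Longrightarrow> (a, b) \<in> A \<Longrightarrow> (r *\<^sub>R a, r *\<^sub>R b) \<in> A"
  by (metis scaleR_Pair subspace_scale)

lemma subspace_PairI:
  assumes "(0, 0) \<in> A"
    and "\<And>a b c d. (a, b) \<in> A \<Longrightarrow> (c, d) \<in> A \<Longrightarrow> (a + c, b + d) \<in> A"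
    and "\<And>r a b. (a, b) \<in> A \<Longrightarrow> (r *\<^sub>R a, r *\<^sub>R b) \<in> A"
  shows "subspace A"
  using assms unfolding subspace_def zero_prod_def by auto

lemma subspace_Domain: "subspace A \<Longrightarrow> subspace (Domain A)"
  unfolding Domain_fst by (intro linear_subspace_image linear_fst)

lemma subspace_Range: "subspace A \<Longrightarrow> subspace (Range A)"
  unfolding Range_snd by (intro linear_subspace_image linear_snd)

lemma subspace_null_space: "subspace A \<Longrightarrow> subspace (null_space A)"
proof -
  assume "subspace A"
  moreover have "null_space A = (\<lambda>x. (x, 0)) -` A"
    by (auto simp: null_space_def)
  ultimately show ?thesis
    by (auto intro!: linear_subspace_vimage simp: linear_iff)
qed

lemma closed_null_space: "closed A \<Longrightarrow> closed (null_space A)"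
proof -
  assume "closed A"
  moreover have "null_space A = (\<lambda>x. (x, 0)) -` A"
    by (auto simp: null_space_def)
  ultimately show ?thesis
    by (auto intro!: continuous_closed_vimage continuous_intros)
qed

lemma is_op_single_valued: "is_op A \<Longrightarrow> (x, y) \<in> A \<Longrightarrow> (x, z) \<in> A \<Longrightarrow> y = z"
  unfolding is_op_def by blast

lemma is_op_at_zero: "is_op A \<Longrightarrow> (0, y) \<in> A \<Longrightarrow> y = 0"
  by (metis is_op_def is_op_single_valued subspace_Pair_zero)

lemma is_op_eq_of_total_subset:
  assumes "is_op A" "B \<subseteq> A" "Domain B = UNIV"
  shows "A = B"
proof
  show "A \<subseteq> B"
  proof
    fix p assume "p \<in> A"
    obtain x y where p: "p = (x, y)"
      by (cases p)
    obtain z where "(x, z) \<in> B"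
      using assms(3) by blast
    with assms(1,2) \<open>p \<in> A\<close> show "p \<in> B"
      unfolding p by (metis is_op_single_valued subsetD)
  qed
qed (fact assms(2))

definition graph_fun :: "('a \<times> 'b) set \<Rightarrow> 'a \<Rightarrow> 'b" where
  "graph_fun A x = (THE y. (x, y) \<in> A)"

lemma graph_fun_eq:
  assumes "is_op A" "(x, y) \<in> A"
  shows "graph_fun A x = y"
  unfolding graph_fun_def
proof (rule the_equality)
  show "z = y" if "(x, z) \<in> A" for z
    using is_op_single_valued[OF assms(1) that assms(2)] .
qed (fact assms(2))

lemma bounded_linear_graph_fun:
  assumes "is_op A" "Domain A = UNIV" "bounded_op A"
  shows "bounded_linear (graph_fun A)"
proof -
  have graph: "(x, graph_fun A x) \<in> A" for x
    using assms(1,2) graph_fun_eq by (metis DomainE UNIV_I)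
  have "subspace A"
    using assms(1) by (simp add: is_op_def)
  obtain C where C: "\<And>x y. (x, y) \<in> A \<Longrightarrow> norm y \<le> C * norm x"
    using assms(3) by (auto simp: bounded_op_def)
  show ?thesis
  proof (rule bounded_linear_intro[where K = C])
    fix x y :: 'a and r :: real
    show "graph_fun A (x + y) = graph_fun A x + graph_fun A y"
      using subspace_Pair_add[OF \<open>subspace A\<close> graph graph] by (rule graph_fun_eq[OF assms(1)])
    show "graph_fun A (r *\<^sub>R x) = r *\<^sub>R graph_fun A x"
      using subspace_Pair_scale[OF \<open>subspace A\<close> graph] by (rule graph_fun_eq[OF assms(1)])
    show "norm (graph_fun A x) \<le> norm x * C"
      using C[OF graph] by (simp add: mult.commute)
  qed
qed

lemma op_mult_assoc: "op_mult A (op_mult B C) = op_mult (op_mult A B) C"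
  by (auto simp: op_mult_def)

lemma subspace_op_mult:
  assumes "subspace A" "subspace B"
  shows "subspace (op_mult A B)"
proof (rule subspace_PairI)
  show "(0, 0) \<in> op_mult A B"
    using assms by (auto simp: op_mult_def intro: subspace_Pair_zero)
  show "(a + c, b + d) \<in> op_mult A B" if h: "(a, b) \<in> op_mult A B" "(c, d) \<in> op_mult A B" for a b c d
  proof -
    obtain u v where "(a, u) \<in> B" "(u, b) \<in> A" "(c, v) \<in> B" "(v, d) \<in> A"
      using h unfolding op_mult_def by blast
    then have "(a + c, u + v) \<in> B" "(u + v, b + d) \<in> A"
      using assms by (simp_all add: subspace_Pair_add)
    then show ?thesis
      unfolding op_mult_def by blast
  qed
  show "(r *\<^sub>R a, r *\<^sub>R b) \<in> op_mult A B" if h: "(a, b) \<in> op_mult A B" for r a b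
  proof -
    obtain u where "(a, u) \<in> B" "(u, b) \<in> A"
      using h unfolding op_mult_def by blast
    then have "(r *\<^sub>R a, r *\<^sub>R u) \<in> B" "(r *\<^sub>R u, r *\<^sub>R b) \<in> A"
      using assms by (simp_all add: subspace_Pair_scale)
    then show ?thesis
      unfolding op_mult_def by blast
  qed
qed

lemma is_op_op_mult:
  assumes "is_op A" "is_op B"
  shows "is_op (op_mult A B)"
  unfolding is_op_def
proof (intro conjI allI impI)
  show "subspace (op_mult A B)"
    using assms by (intro subspace_op_mult) (simp_all add: is_op_def)
  fix x y z assume "(x, y) \<in> op_mult A B" "(x, z) \<in> op_mult A B"
  then obtain u v where "(x, u) \<in> B" "(u, y) \<in> A" "(x, v) \<in> B" "(v, z) \<in> A"
    unfolding op_mult_def by blast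
  with assms show "y = z"
    by (metis is_op_single_valued)
qed

lemma mem_adj_iff: "(y, z) \<in> adj A \<longleftrightarrow> (\<forall>x w. (x, w) \<in> A \<longrightarrow> inner w y = inner x z)"
  by (simp add: adj_def)

lemma subspace_adj: "subspace (adj A)"
  by (rule subspace_PairI) (auto simp: mem_adj_iff inner_add_right)

lemma closed_adj: "closed (adj (A :: ('a::real_inner \<times> 'b::real_inner) set))"
proof -
  have "adj A = (\<Inter>p\<in>A. {q. inner (snd p) (fst q) = inner (fst p) (snd q)})"
    unfolding adj_def by fastforce
  then show ?thesis
    by (auto intro!: closed_INT closed_Collect_eq continuous_intros)
qed

lemma is_op_adj:
  assumes "densely_defined (A :: ('a::real_inner \<times> 'b::real_inner) set)"
  shows "is_op (adj A)"
  unfolding is_op_def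
proof (intro conjI allI impI subspace_adj)
  fix y z1 z2 assume "(y, z1) \<in> adj A" "(y, z2) \<in> adj A"
  then have "Domain A \<subseteq> {x. inner x (z1 - z2) = 0}"
    by (auto simp: mem_adj_iff inner_diff_right)
  then have "closure (Domain A) \<subseteq> {x. inner x (z1 - z2) = 0}"
    by (intro closure_minimal closed_Collect_eq continuous_intros)
  then have "inner (z1 - z2) (z1 - z2) = 0"
    using assms unfolding densely_defined_def by blast
  then show "z1 = z2"
    by simp
qed

lemma adj_adj:
  fixes A :: "('a::{real_inner,complete_space} \<times> 'b::{real_inner,complete_space}) set"
  assumes "subspace A"
  shows "adj (adj A) = closure A"
proof
  have "A \<subseteq> adj (adj A)"
    by (auto simp: mem_adj_iff) (metis inner_commute)
  then show "closure A \<subseteq> adj (adj A)"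
    using closed_adj by (rule closure_minimal)
next
  show "adj (adj A) \<subseteq> closure A"
  proof
    fix p assume p: "p \<in> adj (adj A)"
    define C where "C = closure A"
    have C: "subspace C" "closed C"
      using subspace_closure[OF assms] by (auto simp: C_def)
    obtain q1 q2 where q: "p - orth_proj C p = (q1, q2)"
      by (cases "p - orth_proj C p")
    \<comment> \<open>The component of p orthogonal to the graph of A is, up to a rotation,
      in the graph of adj A.\<close>
    have "(q1, q2) \<in> A\<^sup>\<bottom>"
      using orth_proj_orthogonal[OF C, of p] unfolding q by (simp add: C_def orthogonal_comp_closure)
    then have "(q2, - q1) \<in> adj A"
      by (auto simp: mem_adj_iff mem_orthogonal_comp_iff inner_commute add_eq_0_iff)
    obtain u v where p_eq: "p = (u, v)"
      by (cases p)
    with p have "(u, v) \<in> adj (adj A)"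
      by simp
    with \<open>(q2, - q1) \<in> adj A\<close> have "inner (- q1) u = inner q2 v"
      unfolding mem_adj_iff[of u v "adj A"] by blast
    then have "inner p (q1, q2) = 0"
      by (simp add: p_eq inner_commute)
    moreover have "inner (orth_proj C p) (q1, q2) = 0"
      using orth_proj_orthogonal[OF C, of p] orth_proj_in[OF C, of p]
      by (simp add: q mem_orthogonal_comp_iff)
    ultimately have "inner (p - orth_proj C p) (q1, q2) = 0"
      by (simp add: inner_diff_left)
    then have "p = orth_proj C p"
      by (simp add: q[symmetric])
    then show "p \<in> closure A"
      using orth_proj_in[OF C, of p] by (simp add: C_def)
  qed
qed

lemma adj_adj_closed:
  fixes A :: "('a::{real_inner,complete_space} \<times> 'b::{real_inner,complete_space}) set"
  shows "subspace A \<Longrightarrow> closed A \<Longrightarrow> adj (adj A) = A"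
  by (simp add: adj_adj closure_closed)

lemma null_space_adj: "null_space (adj A) = (Range A)\<^sup>\<bottom>"
  by (simp add: null_space_def mem_adj_iff mem_orthogonal_comp_iff set_eq_iff) blast

lemma null_space_eq_orthogonal_Range_adj:
  fixes A :: "('a::{real_inner,complete_space} \<times> 'b::{real_inner,complete_space}) set"
  assumes "subspace A" "closed A"
  shows "null_space A = (Range (adj A))\<^sup>\<bottom>"
  using null_space_adj[of "adj A"] by (simp add: adj_adj_closed[OF assms])

lemma densely_defined_adj:
  fixes A :: "('a::{real_inner,complete_space} \<times> 'b::{real_inner,complete_space}) set"
  assumes "is_op A" "closed A"
  shows "densely_defined (adj A)"
proof -
  have "subspace A"
    using assms(1) by (simp add: is_op_def)
  \<comment> \<open>A vector k orthogonal to the domain of adj A gives (0, k) in adj (adj A) = A.\<close>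
  have "k = 0" if "k \<in> (Domain (adj A))\<^sup>\<bottom>" for k
  proof -
    have "(0, k) \<in> adj (adj A)"
      using that by (fastforce simp: mem_adj_iff[where A = "adj A"] mem_orthogonal_comp_iff)
    then show "k = 0"
      using assms(1) adj_adj_closed[OF \<open>subspace A\<close> assms(2)] by (simp add: is_op_at_zero)
  qed
  then have "(Domain (adj A))\<^sup>\<bottom> = {0}"
    using subspace_0[OF subspace_orthogonal_comp] by blast
  then show ?thesis
    using orthogonal_comp_orthogonal_comp[OF subspace_Domain[OF subspace_adj[of A]], symmetric]
    by (simp add: densely_defined_def)
qed

section \<open>The Moore--Penrose inverse\<close>

lemma carrier_op_unique:
  assumes "is_op A" "c \<in> carrier_op A" "c' \<in> carrier_op A" "(c, y) \<in> A" "(c', y) \<in> A"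
  shows "c = c'"
proof -
  have "subspace A"
    using assms(1) by (simp add: is_op_def)
  then have "c - c' \<in> null_space A"
    using subspace_Pair_diff[OF _ assms(4,5)] by (simp add: null_space_def)
  moreover have "c \<in> (null_space A)\<^sup>\<bottom>" "c' \<in> (null_space A)\<^sup>\<bottom>"
    using assms(2,3) by (simp_all add: carrier_op_def)
  then have "c - c' \<in> (null_space A)\<^sup>\<bottom>"
    by (rule subspace_diff[OF subspace_orthogonal_comp])
  ultimately have "c - c' \<in> null_space A \<inter> (null_space A)\<^sup>\<bottom>"
    by blast
  then show ?thesis
    using orthogonal_Int_0[OF subspace_null_space[OF \<open>subspace A\<close>]] by simp
qed

lemma carrier_op_decomposition:
  fixes A :: "('a::{real_inner,complete_space} \<times> 'b::real_inner) set"
  assumes "is_op A" "closed (null_space A)" "(x, y) \<in> A"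
  shows "(x - orth_proj (null_space A) x, y) \<in> A"
    and "x - orth_proj (null_space A) x \<in> carrier_op A"
proof -
  have "subspace A"
    using assms(1) by (simp add: is_op_def)
  note N = subspace_null_space[OF this] assms(2)
  have "(orth_proj (null_space A) x, 0) \<in> A"
    using orth_proj_in[OF N] by (simp add: null_space_def)
  from subspace_Pair_diff[OF \<open>subspace A\<close> assms(3) this]
  show "(x - orth_proj (null_space A) x, y) \<in> A"
    by simp
  then show "x - orth_proj (null_space A) x \<in> carrier_op A"
    using orth_proj_orthogonal[OF N] by (auto simp: carrier_op_def)
qed

lemma mp_inv_of_carrier:
  assumes "(c, y) \<in> A" "c \<in> carrier_op A"
  shows "(y, c) \<in> mp_inv A"
proof -
  have "y = y + 0" "0 \<in> (Range A)\<^sup>\<bottom>"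
    by (simp_all add: mem_orthogonal_comp_iff)
  with assms show ?thesis
    unfolding mp_inv_def by blast
qed

lemma Range_mp_inv: "Range (mp_inv A) = carrier_op A"
proof
  show "Range (mp_inv A) \<subseteq> carrier_op A"
    unfolding mp_inv_def by blast
  show "carrier_op A \<subseteq> Range (mp_inv A)"
  proof
    fix c assume "c \<in> carrier_op A"
    moreover obtain y where "(c, y) \<in> A"
      using \<open>c \<in> carrier_op A\<close> by (auto simp: carrier_op_def)
    ultimately show "c \<in> Range (mp_inv A)"
      using mp_inv_of_carrier by blast
  qed
qed

lemma mem_mp_inv_iff:
  fixes A :: "('a::real_inner \<times> 'b::{real_inner,complete_space}) set"
  assumes "is_op A" "closed (Range A)"
  shows "(y, x) \<in> mp_inv A \<longleftrightarrow> x \<in> carrier_op A \<and> (x, orth_proj (Range A) y) \<in> A"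
proof
  have R: "subspace (Range A)" "closed (Range A)"
    using assms by (simp_all add: is_op_def subspace_Range)
  show "(y, x) \<in> mp_inv A \<Longrightarrow> x \<in> carrier_op A \<and> (x, orth_proj (Range A) y) \<in> A"
  proof -
    assume "(y, x) \<in> mp_inv A"
    then obtain y1 y2 where "y = y1 + y2" "(x, y1) \<in> A" "x \<in> carrier_op A" "y2 \<in> (Range A)\<^sup>\<bottom>"
      unfolding mp_inv_def by blast
    moreover from this have "orth_proj (Range A) y = y1"
      by (intro orth_proj_unique[OF R]) auto
    ultimately show ?thesis
      by simp
  qed
  show "x \<in> carrier_op A \<and> (x, orth_proj (Range A) y) \<in> A \<Longrightarrow> (y, x) \<in> mp_inv A"
  proof -
    assume "x \<in> carrier_op A \<and> (x, orth_proj (Range A) y) \<in> A"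
    moreover have "y = orth_proj (Range A) y + (y - orth_proj (Range A) y)"
      by simp
    ultimately show ?thesis
      using orth_proj_orthogonal[OF R, of y] unfolding mp_inv_def by blast
  qed
qed

lemma subspace_mp_inv:
  assumes A: "subspace A"
  shows "subspace (mp_inv A)"
proof (rule subspace_PairI)
  have C: "subspace (carrier_op A)"
    unfolding carrier_op_def
    by (intro subspace_inter subspace_Domain A subspace_orthogonal_comp)
  note R = subspace_orthogonal_comp[of "Range A"]
  show "(0, 0) \<in> mp_inv A"
    using mp_inv_of_carrier subspace_Pair_zero[OF A] subspace_0[OF C] by blast
  fix a b c d assume "(a, b) \<in> mp_inv A" "(c, d) \<in> mp_inv A"
  then obtain a1 a2 c1 c2 where
    "a = a1 + a2" "(b, a1) \<in> A" "b \<in> carrier_op A" "a2 \<in> (Range A)\<^sup>\<bottom>"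
    "c = c1 + c2" "(d, c1) \<in> A" "d \<in> carrier_op A" "c2 \<in> (Range A)\<^sup>\<bottom>"
    unfolding mp_inv_def by blast
  then show "(a + c, b + d) \<in> mp_inv A"
    unfolding mp_inv_def
    by (intro CollectI exI[of _ "b + d"] exI[of _ "a1 + c1"] exI[of _ "a2 + c2"])
      (simp add: subspace_Pair_add[OF A] subspace_add[OF C] subspace_add[OF R])
next
  have C: "subspace (carrier_op A)"
    unfolding carrier_op_def
    by (intro subspace_inter subspace_Domain A subspace_orthogonal_comp)
  note R = subspace_orthogonal_comp[of "Range A"]
  fix r :: real and a b assume "(a, b) \<in> mp_inv A"
  then obtain a1 a2 where "a = a1 + a2" "(b, a1) \<in> A" "b \<in> carrier_op A" "a2 \<in> (Range A)\<^sup>\<bottom>"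
    unfolding mp_inv_def by blast
  then show "(r *\<^sub>R a, r *\<^sub>R b) \<in> mp_inv A"
    unfolding mp_inv_def
    by (intro CollectI exI[of _ "r *\<^sub>R b"] exI[of _ "r *\<^sub>R a1"] exI[of _ "r *\<^sub>R a2"])
      (simp add: subspace_Pair_scale[OF A] subspace_scale[OF C] subspace_scale[OF R]
        scaleR_add_right)
qed

lemma is_op_mp_inv:
  assumes "is_op A"
  shows "is_op (mp_inv A)"
proof -
  have A: "subspace A"
    using assms by (simp add: is_op_def)
  have "x = x'" if h: "(y, x) \<in> mp_inv A" "(y, x') \<in> mp_inv A" for y x x'
  proof -
    obtain a1 a2 c1 c2 where
      "y = a1 + a2" "(x, a1) \<in> A" "x \<in> carrier_op A" "a2 \<in> (Range A)\<^sup>\<bottom>"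
      "y = c1 + c2" "(x', c1) \<in> A" "x' \<in> carrier_op A" "c2 \<in> (Range A)\<^sup>\<bottom>"
      using h unfolding mp_inv_def by blast
    moreover from this have "a1 = c1"
      using orthogonal_decomposition_unique[OF subspace_Range[OF A]] by blast
    ultimately show "x = x'"
      using carrier_op_unique[OF assms] by metis
  qed
  with subspace_mp_inv[OF A] show ?thesis
    unfolding is_op_def by blast
qed

lemma Domain_mp_inv:
  fixes A :: "('a::{real_inner,complete_space} \<times> 'b::{real_inner,complete_space}) set"
  assumes "is_op A" "closed (null_space A)" "closed (Range A)"
  shows "Domain (mp_inv A) = UNIV"
proof -
  have R: "subspace (Range A)"
    using assms(1) by (simp add: is_op_def subspace_Range)
  have "y \<in> Domain (mp_inv A)" for y
  proof -
    obtain x where x: "(x, orth_proj (Range A) y) \<in> A"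
      using orth_proj_in[OF R assms(3), of y] by blast
    then have "(y, x - orth_proj (null_space A) x) \<in> mp_inv A"
      using carrier_op_decomposition[OF assms(1,2) x] by (simp add: mem_mp_inv_iff[OF assms(1,3)])
    then show ?thesis
      by blast
  qed
  then show ?thesis
    by blast
qed

lemma null_space_mp_inv:
  fixes A :: "('a::real_inner \<times> 'b::{real_inner,complete_space}) set"
  assumes "is_op A" "closed (Range A)"
  shows "null_space (mp_inv A) = (Range A)\<^sup>\<bottom>"
proof -
  have A: "subspace A"
    using assms(1) by (simp add: is_op_def)
  note R = subspace_Range[OF A] assms(2)
  have "0 \<in> carrier_op A"
    using subspace_Pair_zero[OF A] subspace_0[OF subspace_orthogonal_comp]
    by (auto simp: carrier_op_def)
  have "(y, 0) \<in> mp_inv A \<longleftrightarrow> y \<in> (Range A)\<^sup>\<bottom>" for y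
  proof -
    have "(y, 0) \<in> mp_inv A \<longleftrightarrow> (0, orth_proj (Range A) y) \<in> A"
      using \<open>0 \<in> carrier_op A\<close> by (simp add: mem_mp_inv_iff[OF assms])
    also have "\<dots> \<longleftrightarrow> orth_proj (Range A) y = 0"
      using is_op_at_zero[OF assms(1)] subspace_Pair_zero[OF A] by auto
    also have "\<dots> \<longleftrightarrow> y \<in> (Range A)\<^sup>\<bottom>"
      using orth_proj_eq_0[OF R] orth_proj_orthogonal[OF R, of y] by auto
    finally show ?thesis .
  qed
  then show ?thesis
    by (auto simp: null_space_def)
qed

lemma carrier_op_mp_inv:
  fixes A :: "('a::{real_inner,complete_space} \<times> 'b::{real_inner,complete_space}) set"
  assumes "is_op A" "closed (null_space A)" "closed (Range A)"
  shows "carrier_op (mp_inv A) = Range A"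
proof -
  have "subspace (Range A)"
    using assms(1) by (simp add: is_op_def subspace_Range)
  then show ?thesis
    using orthogonal_comp_orthogonal_comp_closed[OF _ assms(3)]
    by (simp add: carrier_op_def Domain_mp_inv[OF assms] null_space_mp_inv[OF assms(1,3)])
qed

lemma inner_orth_proj_adj_bound:
  fixes A :: "('a::real_inner \<times> 'b::{real_inner,complete_space}) set"
  assumes "is_op A" "closed (Range A)"
  obtains M where "0 \<le> M"
    "\<And>y k z. (k, z) \<in> adj A \<Longrightarrow> \<bar>inner (orth_proj (Range A) y) k\<bar> \<le> M * norm y * norm z"
proof -
  have R: "subspace (Range A)" "closed (Range A)"
    using assms by (simp_all add: is_op_def subspace_Range)
  define P where "P = orth_proj (Range A)"
  have graph: "inner (P y) k = inner x z" if "(x, P y) \<in> A" "(k, z) \<in> adj A" for x y k z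
    using that by (simp add: mem_adj_iff)
  \<comment> \<open>Uniform boundedness for y \<mapsto> <P y, k> over k with norm (adj A k) \<le> 1; for fixed y these
    values are bounded by norm x, where A x = P y.\<close>
  define I where "I = {k. \<exists>z. (k, z) \<in> adj A \<and> norm z \<le> 1}"
  have "bounded_linear (\<lambda>y. inner (P y) k)" for k
    unfolding P_def by (rule bounded_linear_compose[OF bounded_linear_inner_left bounded_linear_orth_proj[OF R]])
  moreover have "\<exists>B. \<forall>k\<in>I. norm (inner (P y) k) \<le> B" for y
  proof -
    obtain x where x: "(x, P y) \<in> A"
      using orth_proj_in[OF R, of y] by (auto simp: P_def)
    have "\<bar>inner x z\<bar> \<le> norm x" if "norm z \<le> 1" for z :: 'a
      using Cauchy_Schwarz_ineq2[of x z] mult_left_le[OF that norm_ge_zero[of x]] by linarith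
    then show ?thesis
      using graph[OF x] by (intro exI[of _ "norm x"]) (auto simp: I_def)
  qed
  ultimately obtain M where "0 \<le> M" and M: "\<And>k y. k \<in> I \<Longrightarrow> \<bar>inner (P y) k\<bar> \<le> M * norm y"
    by (rule uniform_boundedness[of I "\<lambda>k y. inner (P y) k"]) auto
  have "\<bar>inner (P y) k\<bar> \<le> M * norm y * norm z" if "(k, z) \<in> adj A" for y k z
  proof (cases "z = 0")
    case True
    obtain x where "(x, P y) \<in> A"
      using orth_proj_in[OF R, of y] by (auto simp: P_def)
    with that True show ?thesis
      using graph by simp
  next
    case False
    have "(k /\<^sub>R norm z, z /\<^sub>R norm z) \<in> adj A"
      using subspace_Pair_scale[OF subspace_adj that] by simp
    with False have "k /\<^sub>R norm z \<in> I"
      by (auto simp: I_def intro!: exI[of _ "z /\<^sub>R norm z"])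
    from M[OF this, of y] False show ?thesis
      by (simp add: abs_mult field_simps)
  qed
  with \<open>0 \<le> M\<close> show ?thesis
    using that by (simp add: P_def)
qed

lemma bounded_mp_inv:
  fixes A :: "('a::{real_inner,complete_space} \<times> 'b::{real_inner,complete_space}) set"
  assumes "is_op A" "closed A" "closed (Range A)"
  shows "bounded_op (mp_inv A)"
proof -
  have "subspace A"
    using assms(1) by (simp add: is_op_def)
  obtain M where "0 \<le> M"
    and M: "\<And>y k z. (k, z) \<in> adj A \<Longrightarrow> \<bar>inner (orth_proj (Range A) y) k\<bar> \<le> M * norm y * norm z"
    using inner_orth_proj_adj_bound[OF assms(1,3)] by blast
  have "norm x \<le> M * norm y" if "(y, x) \<in> mp_inv A" for y x
  proof -
    have x: "x \<in> carrier_op A" "(x, orth_proj (Range A) y) \<in> A"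
      using that by (simp_all add: mem_mp_inv_iff[OF assms(1,3)])
    \<comment> \<open>The bound holds against Range (adj A), hence against its closure, which contains x.\<close>
    have "Range (adj A) \<subseteq> {z. \<bar>inner x z\<bar> \<le> M * norm y * norm z}"
    proof
      fix z assume "z \<in> Range (adj A)"
      then obtain k where kz: "(k, z) \<in> adj A"
        by blast
      then have "inner (orth_proj (Range A) y) k = inner x z"
        using x(2) unfolding mem_adj_iff by blast
      with M[OF kz, of y] show "z \<in> {z. \<bar>inner x z\<bar> \<le> M * norm y * norm z}"
        by simp
    qed
    then have "closure (Range (adj A)) \<subseteq> {z. \<bar>inner x z\<bar> \<le> M * norm y * norm z}"
      by (intro closure_minimal closed_Collect_le continuous_intros)
    moreover have "x \<in> closure (Range (adj A))"
      using x(1) orthogonal_comp_orthogonal_comp[OF subspace_Range[OF subspace_adj[of A]]]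
        null_space_eq_orthogonal_Range_adj[OF \<open>subspace A\<close> assms(2)]
      by (simp add: carrier_op_def)
    ultimately have "norm x * norm x \<le> (M * norm y) * norm x"
      by (auto simp: power2_norm_eq_inner[symmetric] power2_eq_square)
    then show ?thesis
      using \<open>0 \<le> M\<close> by (cases "x = 0") (auto simp: mult_le_cancel_right)
  qed
  then show ?thesis
    unfolding bounded_op_def by blast
qed

lemma Range_adj_closed_range:
  fixes A :: "('a::{real_inner,complete_space} \<times> 'b::{real_inner,complete_space}) set"
  assumes "is_op A" "closed A" "closed (Range A)"
  shows "Range (adj A) = (null_space A)\<^sup>\<bottom>"
proof
  show "Range (adj A) \<subseteq> (null_space A)\<^sup>\<bottom>"
    by (auto simp: mem_adj_iff null_space_def mem_orthogonal_comp_iff) (metis inner_zero_left)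
  show "(null_space A)\<^sup>\<bottom> \<subseteq> Range (adj A)"
  proof
    fix h assume h: "h \<in> (null_space A)\<^sup>\<bottom>"
    have "subspace A"
      using assms(1) by (simp add: is_op_def)
    define g where "g = graph_fun (mp_inv A)"
    have g: "(y, g y) \<in> mp_inv A" for y
      using Domain_mp_inv[OF assms(1) closed_null_space[OF assms(2)] assms(3)]
        graph_fun_eq[OF is_op_mp_inv[OF assms(1)]] by (metis DomainE UNIV_I g_def)
    have "bounded_linear g"
      unfolding g_def
      by (intro bounded_linear_graph_fun is_op_mp_inv bounded_mp_inv assms
          Domain_mp_inv closed_null_space)
    \<comment> \<open>The functional y \<mapsto> <g y, h> is bounded, and its Riesz representative k
      satisfies (k, h) \<in> adj A.\<close>
    then obtain k where k: "\<And>y. inner (g y) h = inner y k"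
      using riesz_representation[OF bounded_linear_compose[OF bounded_linear_inner_left]] by metis
    have "inner w k = inner x h" if "(x, w) \<in> A" for x w
    proof -
      have "w \<in> Range A"
        using that by blast
      then have "(g w, w) \<in> A"
        using g[of w] orth_proj_id[OF subspace_Range[OF \<open>subspace A\<close>] assms(3)]
        by (simp add: mem_mp_inv_iff[OF assms(1,3)])
      from subspace_Pair_diff[OF \<open>subspace A\<close> that this]
      have "x - g w \<in> null_space A"
        by (simp add: null_space_def)
      with h have "inner (x - g w) h = 0"
        unfolding mem_orthogonal_comp_iff by blast
      then show ?thesis
        using k[of w] by (simp add: inner_diff_left)
    qed
    then have "(k, h) \<in> adj A"
      by (simp add: mem_adj_iff)
    then show "h \<in> Range (adj A)"
      by blast
  qed
qed

lemma op_mult_mp_inv_right: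
  fixes A :: "('a::{real_inner,complete_space} \<times> 'b::{real_inner,complete_space}) set"
  assumes "is_op A" "closed (null_space A)"
  shows "op_mult A (mp_inv A) = proj_op (Range A)"
proof (intro set_eqI iffI)
  fix p assume "p \<in> op_mult A (mp_inv A)"
  then obtain y z x y1 y2 where "p = (y, z)" "(x, z) \<in> A"
    "y = y1 + y2" "(x, y1) \<in> A" "y2 \<in> (Range A)\<^sup>\<bottom>"
    unfolding op_mult_def mp_inv_def by blast
  moreover from this have "z = y1"
    using is_op_single_valued[OF assms(1)] by blast
  ultimately show "p \<in> proj_op (Range A)"
    by (auto simp: proj_op_def)
next
  fix p assume "p \<in> proj_op (Range A)"
  then obtain y z x where p: "p = (y, z)" "(x, z) \<in> A" "y - z \<in> (Range A)\<^sup>\<bottom>"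
    unfolding proj_op_def by blast
  note c = carrier_op_decomposition[OF assms p(2)]
  have "y = z + (y - z)"
    by simp
  with c p(3) have "(y, x - orth_proj (null_space A) x) \<in> mp_inv A"
    unfolding mp_inv_def by blast
  with c(1) show "p \<in> op_mult A (mp_inv A)"
    unfolding p(1) op_mult_def by blast
qed

lemma op_mult_mp_inv_left:
  fixes A :: "('a::{real_inner,complete_space} \<times> 'b::{real_inner,complete_space}) set"
  assumes "is_op A" "closed (null_space A)" "closed (Range A)"
  shows "op_mult (mp_inv A) A = {p \<in> proj_op ((null_space A)\<^sup>\<bottom>). fst p \<in> Domain A}"
proof (intro set_eqI iffI)
  have A: "subspace A"
    using assms(1) by (simp add: is_op_def)
  note N = subspace_null_space[OF A] assms(2)
  have NN: "(null_space A)\<^sup>\<bottom>\<^sup>\<bottom> = null_space A"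
    by (rule orthogonal_comp_orthogonal_comp_closed[OF N])
  fix p assume "p \<in> op_mult (mp_inv A) A"
  then obtain x y c where p: "p = (x, c)" "(x, y) \<in> A" "(y, c) \<in> mp_inv A"
    unfolding op_mult_def by blast
  moreover have "orth_proj (Range A) y = y"
    using p(2) by (intro orth_proj_id[OF subspace_Range[OF A] assms(3)]) blast
  ultimately have c: "c \<in> carrier_op A" "(c, y) \<in> A"
    by (simp_all add: mem_mp_inv_iff[OF assms(1,3)])
  have "x - c \<in> null_space A"
    using subspace_Pair_diff[OF A p(2) c(2)] by (simp add: null_space_def)
  with c(1) p show "p \<in> {p \<in> proj_op ((null_space A)\<^sup>\<bottom>). fst p \<in> Domain A}"
    by (auto simp: proj_op_def carrier_op_def NN)
next
  have A: "subspace A"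
    using assms(1) by (simp add: is_op_def)
  note N = subspace_null_space[OF A] assms(2)
  have NN: "(null_space A)\<^sup>\<bottom>\<^sup>\<bottom> = null_space A"
    by (rule orthogonal_comp_orthogonal_comp_closed[OF N])
  fix p assume "p \<in> {p \<in> proj_op ((null_space A)\<^sup>\<bottom>). fst p \<in> Domain A}"
  then obtain x c y where p: "p = (x, c)" "(x, y) \<in> A" "c \<in> (null_space A)\<^sup>\<bottom>" "x - c \<in> null_space A"
    by (auto simp: proj_op_def NN)
  then have "(c, y) \<in> A"
    using subspace_Pair_diff[OF A p(2), of "x - c" 0] by (simp add: null_space_def)
  with p(3) have "(y, c) \<in> mp_inv A"
    by (intro mp_inv_of_carrier) (auto simp: carrier_op_def)
  with p(1,2) show "p \<in> op_mult (mp_inv A) A"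
    unfolding op_mult_def by blast
qed

lemma closure_op_mult_mp_inv_left:
  fixes A :: "('a::{real_inner,complete_space} \<times> 'b::{real_inner,complete_space}) set"
  assumes "is_op A" "closed A" "densely_defined A" "closed (Range A)"
  shows "closure (op_mult (mp_inv A) A) = proj_op ((null_space A)\<^sup>\<bottom>)"
  using closure_proj_op_restrict[OF subspace_orthogonal_comp closed_orthogonal_comp] assms
  by (simp add: op_mult_mp_inv_left closed_null_space densely_defined_def)

lemma orthogonal_comp_carrier_op:
  fixes A :: "('a::{real_inner,complete_space} \<times> 'b::real_inner) set"
  assumes "is_op A" "closed (null_space A)" "densely_defined A"
  shows "(carrier_op A)\<^sup>\<bottom> = null_space A"
proof
  have "subspace A"
    using assms(1) by (simp add: is_op_def)
  note N = subspace_null_space[OF this] assms(2)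
  have "carrier_op A \<subseteq> (null_space A)\<^sup>\<bottom>"
    by (simp add: carrier_op_def)
  then have "(null_space A)\<^sup>\<bottom>\<^sup>\<bottom> \<subseteq> (carrier_op A)\<^sup>\<bottom>"
    by (rule orthogonal_comp_anti_mono)
  then show "null_space A \<subseteq> (carrier_op A)\<^sup>\<bottom>"
    by (rule subset_trans[OF orthogonal_comp_subset])
  show "(carrier_op A)\<^sup>\<bottom> \<subseteq> null_space A"
  proof
    fix y assume y: "y \<in> (carrier_op A)\<^sup>\<bottom>"
    define r where "r = y - orth_proj (null_space A) y"
    have r: "r \<in> (null_space A)\<^sup>\<bottom>"
      using orth_proj_orthogonal[OF N] by (simp add: r_def)
    \<comment> \<open>Each d in Domain A splits into a part in carrier_op A and a part in null_space A,
      both orthogonal to r.\<close>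
    have "inner d r = 0" if "d \<in> Domain A" for d
    proof -
      define n where "n = orth_proj (null_space A) d"
      have "d - n \<in> carrier_op A"
        using that carrier_op_decomposition(2)[OF assms(1,2)] by (auto simp: n_def)
      then have "inner (d - n) y = 0" "inner (d - n) (orth_proj (null_space A) y) = 0"
        using y orth_proj_in[OF N, of y]
        by (auto simp: carrier_op_def mem_orthogonal_comp_iff inner_commute)
      moreover have "inner n r = 0"
        using r orth_proj_in[OF N, of d] by (simp add: n_def mem_orthogonal_comp_iff)
      ultimately show ?thesis
        by (simp add: r_def inner_diff_left inner_diff_right algebra_simps)
    qed
    then have "r \<in> (closure (Domain A))\<^sup>\<bottom>"
      by (simp add: orthogonal_comp_closure mem_orthogonal_comp_iff)
    then have "r = 0"
      using assms(3) by (simp add: densely_defined_def)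
    then show "y \<in> null_space A"
      using orth_proj_in[OF N, of y] by (simp add: r_def)
  qed
qed

lemma mp_inv_mp_inv:
  fixes A :: "('a::{real_inner,complete_space} \<times> 'b::{real_inner,complete_space}) set"
  assumes "is_op A" "closed A" "densely_defined A" "closed (Range A)"
  shows "mp_inv (mp_inv A) = A"
proof -
  have A: "subspace A"
    using assms(1) by (simp add: is_op_def)
  note N = subspace_null_space[OF A] closed_null_space[OF assms(2)]
  have carrier: "carrier_op (mp_inv A) = Range A"
    using carrier_op_mp_inv[OF assms(1) N(2) assms(4)] .
  have range_perp: "(Range (mp_inv A))\<^sup>\<bottom> = null_space A"
    using orthogonal_comp_carrier_op[OF assms(1) N(2) assms(3)] by (simp add: Range_mp_inv)
  show ?thesis
  proof (intro set_eqI iffI)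
    fix p assume "p \<in> mp_inv (mp_inv A)"
    then obtain u1 u2 v where p: "p = (u1 + u2, v)" "(v, u1) \<in> mp_inv A"
      "v \<in> Range A" "u2 \<in> null_space A"
      unfolding mp_inv_def[of "mp_inv A"] carrier range_perp by blast
    then have "(u1, v) \<in> A"
      using orth_proj_id[OF subspace_Range[OF A] assms(4)] by (simp add: mem_mp_inv_iff[OF assms(1,4)])
    from subspace_Pair_add[OF A this, of u2 0] p(4) show "p \<in> A"
      by (simp add: p(1) null_space_def)
  next
    fix p assume "p \<in> A"
    then obtain u v where p: "p = (u, v)" "(u, v) \<in> A"
      by (cases p) auto
    define n where "n = orth_proj (null_space A) u"
    have "(v, u - n) \<in> mp_inv A"
      using carrier_op_decomposition[OF assms(1) N(2) p(2)] by (intro mp_inv_of_carrier) (auto simp: n_def)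
    moreover have "u = (u - n) + n" "v \<in> Range A" "n \<in> null_space A"
      using p(2) orth_proj_in[OF N] by (auto simp: n_def)
    ultimately show "p \<in> mp_inv (mp_inv A)"
      unfolding mp_inv_def[of "mp_inv A"] carrier range_perp p(1) by blast
  qed
qed

lemma mp_inv_adj_subset:
  fixes A :: "('a::{real_inner,complete_space} \<times> 'b::{real_inner,complete_space}) set"
  assumes "is_op A" "closed A" "densely_defined A" "closed (Range A)"
  shows "mp_inv (adj A) \<subseteq> adj (mp_inv A)"
proof
  have A: "subspace A"
    using assms(1) by (simp add: is_op_def)
  have R: "subspace (Range A)" "closed (Range A)"
    using assms(4) subspace_Range[OF A] by simp_all
  have RA: "subspace (Range (adj A))" "closed (Range (adj A))"
    using subspace_Range[OF subspace_adj] Range_adj_closed_range[OF assms(1,2,4)]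
    by (simp_all add: closed_orthogonal_comp subspace_orthogonal_comp)
  have opA: "is_op (adj A)"
    using is_op_adj[OF assms(3)] .
  fix p assume "p \<in> mp_inv (adj A)"
  then obtain h s where p: "p = (h, s)" "s \<in> carrier_op (adj A)"
    "(s, orth_proj (Range (adj A)) h) \<in> adj A"
    by (cases p) (auto simp: mem_mp_inv_iff[OF opA RA(2)])
  have "s \<in> Range A"
    using p(2) orthogonal_comp_orthogonal_comp_closed[OF R]
    by (simp add: carrier_op_def null_space_adj)
  have "h - orth_proj (Range (adj A)) h \<in> null_space A"
    using orth_proj_orthogonal[OF RA, of h] null_space_eq_orthogonal_Range_adj[OF A assms(2)]
    by simp
  have "inner x h = inner y s" if "(y, x) \<in> mp_inv A" for y x
  proof -
    have x: "x \<in> carrier_op A" "(x, orth_proj (Range A) y) \<in> A"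
      using that by (simp_all add: mem_mp_inv_iff[OF assms(1,4)])
    have "x \<in> (null_space A)\<^sup>\<bottom>"
      using x(1) by (simp add: carrier_op_def)
    have "inner y s = inner (orth_proj (Range A) y) s"
      using inner_eq_if_diff_orthogonal[OF \<open>s \<in> Range A\<close> orth_proj_orthogonal[OF R, of y]]
      by (simp add: inner_commute)
    also have "\<dots> = inner x (orth_proj (Range (adj A)) h)"
      using p(3) x(2) by (simp add: mem_adj_iff)
    also have "\<dots> = inner x h"
    proof -
      have "h - orth_proj (Range (adj A)) h \<in> (null_space A)\<^sup>\<bottom>\<^sup>\<bottom>"
        using \<open>h - orth_proj (Range (adj A)) h \<in> null_space A\<close> orthogonal_comp_subset[of "null_space A"] by blast
      from inner_eq_if_diff_orthogonal[OF \<open>x \<in> (null_space A)\<^sup>\<bottom>\<close> this] show ?thesis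
        by simp
    qed
    finally show ?thesis
      by simp
  qed
  then show "p \<in> adj (mp_inv A)"
    by (simp add: p(1) mem_adj_iff)
qed

lemma mp_inv_adj:
  fixes A :: "('a::{real_inner,complete_space} \<times> 'b::{real_inner,complete_space}) set"
  assumes "is_op A" "closed A" "densely_defined A" "closed (Range A)"
  shows "mp_inv (adj A) = adj (mp_inv A)"
proof (rule is_op_eq_of_total_subset[symmetric])
  have "Domain (mp_inv A) = UNIV"
    using Domain_mp_inv[OF assms(1) closed_null_space[OF assms(2)] assms(4)] .
  then show "is_op (adj (mp_inv A))"
    by (intro is_op_adj) (simp add: densely_defined_def)
  have "closed (Range (adj A))"
    using Range_adj_closed_range[OF assms(1,2,4)] by (simp add: closed_orthogonal_comp)
  then show "Domain (mp_inv (adj A)) = UNIV"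
    using Domain_mp_inv[OF is_op_adj[OF assms(3)] closed_null_space[OF closed_adj]] by blast
  show "mp_inv (adj A) \<subseteq> adj (mp_inv A)"
    using mp_inv_adj_subset[OF assms] .
qed

section \<open>The operator adj T T\<close>

lemma null_space_adj_mult:
  assumes "is_op T"
  shows "null_space (op_mult (adj T) T) = null_space T"
proof (intro set_eqI iffI)
  fix x assume "x \<in> null_space (op_mult (adj T) T)"
  then obtain y where "(x, y) \<in> T" "(y, 0) \<in> adj T"
    by (auto simp: null_space_def op_mult_def)
  then have "inner y y = 0"
    by (auto simp: mem_adj_iff)
  with \<open>(x, y) \<in> T\<close> show "x \<in> null_space T"
    by (simp add: null_space_def)
next
  fix x assume "x \<in> null_space T"
  with subspace_Pair_zero[OF subspace_adj] show "x \<in> null_space (op_mult (adj T) T)"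
    by (auto simp: null_space_def op_mult_def)
qed

lemma Range_adj_mult:
  fixes T :: "('a::real_inner \<times> 'b::{real_inner,complete_space}) set"
  assumes "is_op T" "closed (Range T)"
  shows "Range (op_mult (adj T) T) = Range (adj T)"
proof
  show "Range (op_mult (adj T) T) \<subseteq> Range (adj T)"
    by (auto simp: op_mult_def)
  show "Range (adj T) \<subseteq> Range (op_mult (adj T) T)"
  proof
    fix z assume "z \<in> Range (adj T)"
    then obtain y where y: "(y, z) \<in> adj T"
      by blast
    have R: "subspace (Range T)" "closed (Range T)"
      using assms by (simp_all add: is_op_def subspace_Range)
    \<comment> \<open>adj T vanishes on the complement of Range T, so y may be replaced by its projection.\<close>
    have "(y - orth_proj (Range T) y, 0) \<in> adj T"
      using orth_proj_orthogonal[OF R, of y] by (simp add: null_space_adj[symmetric] null_space_def)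
    from subspace_Pair_diff[OF subspace_adj y this] have "(orth_proj (Range T) y, z) \<in> adj T"
      by simp
    moreover obtain x where "(x, orth_proj (Range T) y) \<in> T"
      using orth_proj_in[OF R, of y] by blast
    ultimately show "z \<in> Range (op_mult (adj T) T)"
      by (auto simp: op_mult_def)
  qed
qed

lemma Range_Int_Domain_adj_subset_carrier_op: "Range T \<inter> Domain (adj T) \<subseteq> carrier_op (adj T)"
  using orthogonal_comp_subset[of "Range T"] by (auto simp: carrier_op_def null_space_adj)

lemma id_plus_adj_mult_surj:
  fixes T :: "('a::{real_inner,complete_space} \<times> 'b::{real_inner,complete_space}) set"
  assumes "is_op T" "closed T"
  obtains u z where "(u, z) \<in> op_mult (adj T) T" "h = u + z"
proof -
  have T: "subspace T" "closed T"
    using assms by (simp_all add: is_op_def)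
  obtain u v where uv: "orth_proj T (h, 0) = (u, v)"
    by (cases "orth_proj T (h, 0)")
  have "(u, v) \<in> T"
    using orth_proj_in[OF T, of "(h, 0)"] by (simp add: uv)
  \<comment> \<open>Orthogonality of (h - u, - v) to the graph says exactly that (v, h - u) is in adj T.\<close>
  have "(h - u, - v) \<in> T\<^sup>\<bottom>"
    using orth_proj_orthogonal[OF T, of "(h, 0)"] by (simp add: uv)
  then have "(- v, u - h) \<in> adj T"
    by (auto simp: mem_adj_iff mem_orthogonal_comp_iff inner_diff_right)
  from subspace_Pair_scale[OF subspace_adj this, of "-1"] have "(v, h - u) \<in> adj T"
    by simp
  with \<open>(u, v) \<in> T\<close> have "(u, h - u) \<in> op_mult (adj T) T"
    by (auto simp: op_mult_def)
  then show ?thesis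
    using that by simp
qed

lemma adj_mult_subset_adj: "op_mult (adj T) T \<subseteq> adj (op_mult (adj T) T)"
proof
  fix p assume "p \<in> op_mult (adj T) T"
  then obtain u v z where p: "p = (u, z)" "(u, v) \<in> T" "(v, z) \<in> adj T"
    unfolding op_mult_def by blast
  have "inner w u = inner x z" if xw: "(x, w) \<in> op_mult (adj T) T" for x w
  proof -
    obtain y where y: "(x, y) \<in> T" "(y, w) \<in> adj T"
      using xw unfolding op_mult_def by blast
    have "inner v y = inner u w"
      using y(2) p(2) unfolding mem_adj_iff by blast
    moreover have "inner y v = inner x z"
      using p(3) y(1) unfolding mem_adj_iff by blast
    ultimately show ?thesis
      by (simp add: inner_commute)
  qed
  then show "p \<in> adj (op_mult (adj T) T)"
    by (simp add: p(1) mem_adj_iff)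
qed

lemma adj_adj_mult:
  fixes T :: "('a::{real_inner,complete_space} \<times> 'b::{real_inner,complete_space}) set"
  assumes "is_op T" "closed T"
  shows "adj (op_mult (adj T) T) = op_mult (adj T) T"
proof
  define B where "B = op_mult (adj T) T"
  have sym: "B \<subseteq> adj B"
    unfolding B_def by (rule adj_mult_subset_adj)
  show "adj (op_mult (adj T) T) \<subseteq> op_mult (adj T) T"
  proof
    fix p assume "p \<in> adj (op_mult (adj T) T)"
    then obtain y z where p: "p = (y, z)" "(y, z) \<in> adj B"
      unfolding B_def by (cases p) auto
    obtain u au where u: "(u, au) \<in> B" "y + z = u + au"
      using id_plus_adj_mult_surj[OF assms] unfolding B_def by metis
    \<comment> \<open>e = y - u satisfies (e, - e) \<in> adj B, so e is orthogonal to the range of the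
      identity plus B.\<close>
    define e where "e = y - u"
    have "z - au = - e"
      using u(2) by (simp add: e_def algebra_simps)
    then have "(e, - e) \<in> adj B"
      using subspace_Pair_diff[OF subspace_adj p(2) subsetD[OF sym u(1)]] by (simp add: e_def)
    then have orth: "inner (v + av) e = 0" if "(v, av) \<in> B" for v av
      using that by (simp add: mem_adj_iff inner_add_left)
    obtain v av where "(v, av) \<in> B" "e = v + av"
      using id_plus_adj_mult_surj[OF assms] unfolding B_def by metis
    with orth have "inner e e = 0"
      by simp
    then have "e = 0"
      by simp
    with u p show "p \<in> op_mult (adj T) T"
      by (simp add: B_def e_def)
  qed
qed (rule adj_mult_subset_adj)

lemma orthogonal_adj_mult_restrict_eq_0:
  fixes T :: "('a::{real_inner,complete_space} \<times> 'b::{real_inner,complete_space}) set"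
  assumes "is_op T" "closed T" "(q1, q2) \<in> T"
    and "(q1, q2) \<in> {p \<in> T. fst p \<in> Domain (op_mult (adj T) T)}\<^sup>\<bottom>"
  shows "(q1, q2) = 0"
proof -
  \<comment> \<open>Write q1 = u + adj T (T u); testing (q1, q2) against (u, T u) gives norm q1 = 0.\<close>
  obtain u z where uz: "(u, z) \<in> op_mult (adj T) T" "q1 = u + z"
    using id_plus_adj_mult_surj[OF assms(1,2)] by metis
  then obtain v where v: "(u, v) \<in> T" "(v, z) \<in> adj T"
    unfolding op_mult_def by blast
  with uz(1) assms(4) have "inner (u, v) (q1, q2) = 0"
    unfolding mem_orthogonal_comp_iff by force
  moreover have "inner q2 v = inner q1 z"
    using v(2) assms(3) by (simp add: mem_adj_iff)
  ultimately have "inner q1 q1 = 0"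
    by (simp add: uz(2) inner_add_left inner_commute)
  with assms(3) have "(0, q2) \<in> T"
    by simp
  then have "q2 = 0"
    by (rule is_op_at_zero[OF assms(1)])
  with \<open>inner q1 q1 = 0\<close> show ?thesis
    by (simp add: zero_prod_def)
qed

lemma closure_eq_if_orthogonal_eq_0:
  fixes G T :: "'a::{real_inner,complete_space} set"
  assumes "subspace G" "G \<subseteq> T" "subspace T" "closed T" "\<And>q. q \<in> T \<Longrightarrow> q \<in> G\<^sup>\<bottom> \<Longrightarrow> q = 0"
  shows "closure G = T"
proof
  show "closure G \<subseteq> T"
    using assms(2,4) by (rule closure_minimal)
  have C: "subspace (closure G)" "closed (closure G)"
    using assms(1) by (simp_all add: subspace_closure)
  show "T \<subseteq> closure G"
  proof
    fix p assume "p \<in> T"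
    have "orth_proj (closure G) p \<in> T"
      using orth_proj_in[OF C, of p] \<open>closure G \<subseteq> T\<close> by blast
    with \<open>p \<in> T\<close> have "p - orth_proj (closure G) p \<in> T"
      by (rule subspace_diff[OF assms(3)])
    moreover have "p - orth_proj (closure G) p \<in> G\<^sup>\<bottom>"
      using orth_proj_orthogonal[OF C, of p] by (simp add: orthogonal_comp_closure)
    ultimately have "p - orth_proj (closure G) p = 0"
      by (rule assms(5))
    then show "p \<in> closure G"
      using orth_proj_in[OF C, of p] by simp
  qed
qed

lemma adj_mult_core:
  fixes T :: "('a::{real_inner,complete_space} \<times> 'b::{real_inner,complete_space}) set"
  assumes "is_op T" "closed T"
  shows "closure {p \<in> T. fst p \<in> Domain (op_mult (adj T) T)} = T"
proof (rule closure_eq_if_orthogonal_eq_0)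
  have T: "subspace T"
    using assms(1) by (simp add: is_op_def)
  then show "subspace T" .
  show "subspace {p \<in> T. fst p \<in> Domain (op_mult (adj T) T)}"
    using subspace_inter[OF T linear_subspace_vimage[OF linear_fst subspace_Domain[OF
          subspace_op_mult[OF subspace_adj T]]]]
    by (simp add: Int_def vimage_def)
  show "q = 0" if "q \<in> T" "q \<in> {p \<in> T. fst p \<in> Domain (op_mult (adj T) T)}\<^sup>\<bottom>" for q
    using orthogonal_adj_mult_restrict_eq_0[OF assms, of "fst q" "snd q"] that by simp
qed (use assms(2) in auto)

section \<open>The generalized Cauchy dual\<close>

lemma Domain_cauchy_dual:
  fixes S :: "('a::{real_inner,complete_space} \<times> 'b::{real_inner,complete_space}) set"
  assumes "is_op S" "closed S" "densely_defined S" "closed (Range S)"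
  shows "Domain (cauchy_dual S) = UNIV"
proof -
  define B where "B = op_mult (adj S) S"
  have "is_op B" "closed (null_space B)" "closed (Range B)"
    using is_op_op_mult[OF is_op_adj[OF assms(3)] assms(1)] closed_null_space[OF assms(2)]
      null_space_adj_mult[OF assms(1)] Range_adj_mult[OF assms(1,4)]
      Range_adj_closed_range[OF assms(1,2,4)] closed_orthogonal_comp
    by (simp_all add: B_def)
  have "h \<in> Domain (cauchy_dual S)" for h
  proof -
    obtain u where u: "(h, u) \<in> mp_inv B"
      using Domain_mp_inv[OF \<open>is_op B\<close> \<open>closed (null_space B)\<close> \<open>closed (Range B)\<close>] by blast
    then have "u \<in> Domain B"
      using Range_mp_inv[of B] by (auto simp: carrier_op_def)
    then obtain y where "(u, y) \<in> S"
      by (auto simp: B_def op_mult_def)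
    with u show ?thesis
      by (auto simp: cauchy_dual_def B_def op_mult_def)
  qed
  then show ?thesis
    by blast
qed

lemma cauchy_dual_eq_mp_inv_adj:
  fixes S :: "('a::{real_inner,complete_space} \<times> 'b::{real_inner,complete_space}) set"
  assumes "is_op S" "closed S" "densely_defined S" "closed (Range S)"
  shows "cauchy_dual S = mp_inv (adj S)"
proof (rule is_op_eq_of_total_subset[symmetric])
  define B where "B = op_mult (adj S) S"
  show "is_op (mp_inv (adj S))"
    using is_op_mp_inv[OF is_op_adj[OF assms(3)]] .
  show "Domain (cauchy_dual S) = UNIV"
    using Domain_cauchy_dual[OF assms] .
  show "cauchy_dual S \<subseteq> mp_inv (adj S)"
  proof
    fix p assume "p \<in> cauchy_dual S"
    then obtain h y u z1 z2 where p: "p = (h, y)" "(u, y) \<in> S" "h = z1 + z2" "(u, z1) \<in> B"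
      "z2 \<in> (Range B)\<^sup>\<bottom>"
      unfolding cauchy_dual_def B_def[symmetric] op_mult_def[of S] mp_inv_def by blast
    then have "(y, z1) \<in> adj S"
      using is_op_single_valued[OF assms(1)] by (auto simp: B_def op_mult_def)
    moreover from this have "y \<in> carrier_op (adj S)"
      using Range_Int_Domain_adj_subset_carrier_op p(2) by blast
    moreover have "z2 \<in> (Range (adj S))\<^sup>\<bottom>"
      using p(5) Range_adj_mult[OF assms(1,4)] by (simp add: B_def)
    ultimately show "p \<in> mp_inv (adj S)"
      unfolding mp_inv_def p(1,3) by blast
  qed
qed

locale closed_range_operator =
  fixes T :: "('a::{real_inner,complete_space} \<times> 'b::{real_inner,complete_space}) set"
  assumes is_op: "is_op T"
    and closed_graph: "closed T"
    and dense: "densely_defined T"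
    and closed_range: "closed (Range T)"
begin

lemma subspace_graph: "subspace T"
  using is_op by (simp add: is_op_def)

lemma adj_adj_eq: "adj (adj T) = T"
  using adj_adj_closed[OF subspace_graph closed_graph] .

lemma Range_adj: "Range (adj T) = (null_space T)\<^sup>\<bottom>"
  using Range_adj_closed_range[OF is_op closed_graph closed_range] .

lemma closed_range_operator_adj: "closed_range_operator (adj T)"
  by unfold_locales
    (simp_all add: is_op_adj[OF dense] closed_adj densely_defined_adj[OF is_op closed_graph]
      Range_adj closed_orthogonal_comp)

lemma closed_range_operator_adj_mult: "closed_range_operator (op_mult (adj T) T)"
proof -
  have "is_op (op_mult (adj T) T)"
    using is_op_op_mult[OF is_op_adj[OF dense] is_op] .
  moreover have "closed (op_mult (adj T) T)"
    using closed_adj[of "op_mult (adj T) T"] by (simp add: adj_adj_mult[OF is_op closed_graph])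
  ultimately show ?thesis
    using densely_defined_adj[of "op_mult (adj T) T"] Range_adj_mult[OF is_op closed_range]
    by unfold_locales
      (simp_all add: adj_adj_mult[OF is_op closed_graph] Range_adj closed_orthogonal_comp)
qed

lemma cauchy_dual_eq: "cauchy_dual T = mp_inv (adj T)"
  using cauchy_dual_eq_mp_inv_adj[OF is_op closed_graph dense closed_range] .

lemma mp_inv_adj_eq: "mp_inv (adj T) = adj (mp_inv T)"
  using mp_inv_adj[OF is_op closed_graph dense closed_range] .

lemma bounded_op_mp_inv: "bounded_op (mp_inv T)"
  using bounded_mp_inv[OF is_op closed_graph closed_range] .

lemma mult_mp_inv: "op_mult T (mp_inv T) = proj_op (Range T)"
  using op_mult_mp_inv_right[OF is_op closed_null_space[OF closed_graph]] .

lemma closure_mp_inv_mult: "closure (op_mult (mp_inv T) T) = proj_op (Range (adj T))"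
  using closure_op_mult_mp_inv_left[OF is_op closed_graph dense closed_range]
  by (simp add: Range_adj)

lemma cauchy_dual_adj_eq: "cauchy_dual (adj T) = mp_inv T"
proof -
  interpret A: closed_range_operator "adj T"
    by (rule closed_range_operator_adj)
  show ?thesis
    using A.cauchy_dual_eq by (simp add: adj_adj_eq)
qed

lemma adj_cauchy_dual_eq: "adj (cauchy_dual T) = mp_inv T"
proof -
  interpret A: closed_range_operator "adj T"
    by (rule closed_range_operator_adj)
  show ?thesis
    using A.mp_inv_adj_eq by (simp add: cauchy_dual_eq adj_adj_eq)
qed

lemma mp_inv_mult_mp_inv_adj: "op_mult (mp_inv T) (mp_inv (adj T)) = mp_inv (op_mult (adj T) T)"
proof (rule is_op_eq_of_total_subset)
  interpret A: closed_range_operator "adj T"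
    by (rule closed_range_operator_adj)
  interpret B: closed_range_operator "op_mult (adj T) T"
    by (rule closed_range_operator_adj_mult)
  show "is_op (op_mult (mp_inv T) (mp_inv (adj T)))"
    by (intro is_op_op_mult is_op_mp_inv is_op A.is_op)
  show "Domain (mp_inv (op_mult (adj T) T)) = UNIV"
    by (rule Domain_mp_inv[OF B.is_op closed_null_space[OF B.closed_graph] B.closed_range])
  show "mp_inv (op_mult (adj T) T) \<subseteq> op_mult (mp_inv T) (mp_inv (adj T))"
  proof
    fix p assume "p \<in> mp_inv (op_mult (adj T) T)"
    then obtain h a where "p = (h, a)" "(h, a) \<in> mp_inv (op_mult (adj T) T)"
      by (cases p) auto
    then have "a \<in> carrier_op (op_mult (adj T) T)"
      and "(a, orth_proj (Range (adj T)) h) \<in> op_mult (adj T) T"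
      by (simp_all add: mem_mp_inv_iff[OF B.is_op B.closed_range] Range_adj_mult[OF is_op closed_range])
    then obtain v where p: "p = (h, a)" "a \<in> carrier_op (op_mult (adj T) T)"
      "(a, v) \<in> T" "(v, orth_proj (Range (adj T)) h) \<in> adj T"
      using \<open>p = (h, a)\<close> unfolding op_mult_def[of "adj T" T] by blast
    have "v \<in> carrier_op (adj T)"
      using Range_Int_Domain_adj_subset_carrier_op p(3,4) by blast
    with p(4) have "(h, v) \<in> mp_inv (adj T)"
      by (simp add: mem_mp_inv_iff[OF A.is_op A.closed_range])
    moreover have "a \<in> carrier_op T"
      using p(2,3) by (auto simp: carrier_op_def null_space_adj_mult[OF is_op])
    with p(3) have "(v, a) \<in> mp_inv T"
      by (intro mp_inv_of_carrier)
    ultimately show "p \<in> op_mult (mp_inv T) (mp_inv (adj T))"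
      unfolding p(1) op_mult_def by blast
  qed
qed

lemma mp_inv_adj_adj_mult:
  "op_mult (mp_inv (adj T)) (op_mult (adj T) T) = {p \<in> T. fst p \<in> Domain (op_mult (adj T) T)}"
proof -
  interpret A: closed_range_operator "adj T"
    by (rule closed_range_operator_adj)
  have R: "subspace (Range T)"
    using subspace_Range[OF subspace_graph] .
  have "(null_space (adj T))\<^sup>\<bottom> = Range T"
    using orthogonal_comp_orthogonal_comp_closed[OF R closed_range] by (simp add: null_space_adj)
  then have "op_mult (mp_inv (adj T)) (adj T) = {p \<in> proj_op (Range T). fst p \<in> Domain (adj T)}"
    using op_mult_mp_inv_left[OF A.is_op closed_null_space[OF A.closed_graph] A.closed_range] by simp
  then have assoc: "op_mult (mp_inv (adj T)) (op_mult (adj T) T) =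
      op_mult {p \<in> proj_op (Range T). fst p \<in> Domain (adj T)} T"
    by (simp add: op_mult_assoc)
  show ?thesis
    unfolding assoc
  proof (intro set_eqI iffI)
    fix p assume "p \<in> op_mult {p \<in> proj_op (Range T). fst p \<in> Domain (adj T)} T"
    then obtain x y z w where p: "p = (x, z)" "(x, y) \<in> T" "(y, z) \<in> proj_op (Range T)"
      "(y, w) \<in> adj T"
      by (auto simp: op_mult_def)
    moreover from this have "z = y"
      using proj_op_id_iff[OF R closed_range] by blast
    ultimately show "p \<in> {p \<in> T. fst p \<in> Domain (op_mult (adj T) T)}"
      by (auto simp: op_mult_def)
  next
    fix p assume "p \<in> {p \<in> T. fst p \<in> Domain (op_mult (adj T) T)}"
    then obtain x y z w where p: "p = (x, z)" "(x, z) \<in> T" "(x, y) \<in> T" "(y, w) \<in> adj T"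
      by (cases p) (auto simp: op_mult_def)
    moreover from this have "y = z"
      using is_op_single_valued[OF is_op] by blast
    moreover have "(z, z) \<in> proj_op (Range T)"
      using proj_op_id_iff[OF R closed_range] \<open>(x, z) \<in> T\<close> by blast
    ultimately show "p \<in> op_mult {p \<in> proj_op (Range T). fst p \<in> Domain (adj T)} T"
      unfolding op_mult_def by force
  qed
qed

lemma cauchy_dual_cauchy_dual:
  "cauchy_dual (cauchy_dual T) = {p \<in> T. fst p \<in> Domain (op_mult (adj T) T)}"
proof -
  interpret B: closed_range_operator "op_mult (adj T) T"
    by (rule closed_range_operator_adj_mult)
  show ?thesis
    unfolding cauchy_dual_def[of "cauchy_dual T"] adj_cauchy_dual_eq
    by (simp add: cauchy_dual_eq mp_inv_mult_mp_inv_adj mp_inv_adj_adj_mult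
        mp_inv_mp_inv[OF B.is_op B.closed_graph B.dense B.closed_range])
qed

end

theorem proposition2p1:
  fixes T :: "('a::{real_inner, complete_space} \<times> 'b::{real_inner, complete_space}) set"
  assumes "is_op T" and "densely_defined T" and "closed_op T" and "closed (Range T)"
  shows "(cauchy_dual T = adj (mp_inv T) \<and> bounded_op (cauchy_dual T))
       \<and> (closable (cauchy_dual (cauchy_dual T)) \<and>
         op_closure (cauchy_dual (cauchy_dual T)) = T)
       \<and> (adj (cauchy_dual T) = cauchy_dual (adj T))
       \<and> (op_mult (adj T) (cauchy_dual T) = op_closure (op_mult (cauchy_dual (adj T)) T) \<and>
         op_closure (op_mult (cauchy_dual (adj T)) T) = proj_op (Range (adj T)))
       \<and> (op_closure (op_mult (cauchy_dual T) (adj T)) = op_mult T (cauchy_dual (adj T)) \<and>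
         op_mult T (cauchy_dual (adj T)) = proj_op (Range T))
       \<and> (op_mult (adj (cauchy_dual T)) (cauchy_dual T) = cauchy_dual (op_mult (adj T) T))"
proof -
  interpret T: closed_range_operator T
    using assms by unfold_locales (simp_all add: closed_op_def)
  interpret A: closed_range_operator "adj T"
    by (rule T.closed_range_operator_adj)
  interpret B: closed_range_operator "op_mult (adj T) T"
    by (rule T.closed_range_operator_adj_mult)
  have "cauchy_dual T = adj (mp_inv T)"
    by (simp add: T.cauchy_dual_eq T.mp_inv_adj_eq)
  moreover have "bounded_op (cauchy_dual T)"
    using A.bounded_op_mp_inv by (simp add: T.cauchy_dual_eq)
  moreover have "closure (cauchy_dual (cauchy_dual T)) = T"
    using adj_mult_core[OF T.is_op T.closed_graph] by (simp add: T.cauchy_dual_cauchy_dual)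
  moreover have "adj (cauchy_dual T) = cauchy_dual (adj T)"
    by (simp add: T.adj_cauchy_dual_eq T.cauchy_dual_adj_eq)
  moreover have "op_mult (adj T) (cauchy_dual T) = proj_op (Range (adj T))"
    using A.mult_mp_inv by (simp add: T.cauchy_dual_eq)
  moreover have "closure (op_mult (cauchy_dual (adj T)) T) = proj_op (Range (adj T))"
    using T.closure_mp_inv_mult by (simp add: T.cauchy_dual_adj_eq)
  moreover have "closure (op_mult (cauchy_dual T) (adj T)) = proj_op (Range T)"
    using A.closure_mp_inv_mult by (simp add: T.cauchy_dual_eq T.adj_adj_eq)
  moreover have "op_mult T (cauchy_dual (adj T)) = proj_op (Range T)"
    using T.mult_mp_inv by (simp add: T.cauchy_dual_adj_eq)
  moreover have "op_mult (adj (cauchy_dual T)) (cauchy_dual T) = cauchy_dual (op_mult (adj T) T)"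
    unfolding T.adj_cauchy_dual_eq B.cauchy_dual_eq adj_adj_mult[OF T.is_op T.closed_graph]
    by (simp add: T.cauchy_dual_eq T.mp_inv_mult_mp_inv_adj)
  ultimately show ?thesis
    unfolding op_closure_def closable_def using T.is_op by simp
qed

end
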